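(* Let $p\in(0,1)$ be fixed and let $a=\lfloor 2\log_{1/(1-p)}n-8\log_{1/(1-p)}\ln n\rfloor$. With high probability, in $G(n,p)$, for every pair of disjoint sets $A\subset N(1)$ and $B\subset[n]\setminus\{1\}$ with $|A|=|B|=\lfloor n/\ln^2 n\rfloor$, there exists an induced subgraph of $G(n,p)$ isomorphic to $K_{1,a-1}$ whose central vertex lies in $A$ and all of whose other vertices lie in $B$.
   Context: $G(n,p)$ is the binomial random graph on vertex set $[n]$ in which each pair of vertices is adjacent independently with probability $p$; with high probability means with probability tending to $1$ as $n\to\infty$. $N(1)$ denotes the set of neighbours of vertex $1$ in $G(n,p)$. $K_{1,a-1}$ is the star with one central vertex and $a-1$ leaves. *)

theory Defs
  imports "HOL-Probability.Probability"
begin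

definition pairs :: "nat \<Rightarrow> nat set set" where
  "pairs n = {{u, v} | u v. u \<in> {1..n} \<and> v \<in> {1..n} \<and> u \<noteq> v}"

text \<open>The binomial random graph G(n,p): each potential edge present independently with prob. p.
  A graph is encoded by the indicator function of its edge set.\<close>
definition Gnp :: "nat \<Rightarrow> real \<Rightarrow> (nat set \<Rightarrow> bool) pmf" where
  "Gnp n p = Pi_pmf (pairs n) False (\<lambda>_. bernoulli_pmf p)"

definition adj :: "(nat set \<Rightarrow> bool) \<Rightarrow> nat \<Rightarrow> nat \<Rightarrow> bool" where
  "adj G u v \<longleftrightarrow> u \<noteq> v \<and> G {u, v}"

definition nbhd :: "nat \<Rightarrow> (nat set \<Rightarrow> bool) \<Rightarrow> nat \<Rightarrow> nat set" where
  "nbhd n G v = {u \<in> {1..n}. adj G v u}"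

text \<open>The subgraph induced on {c} \<union> L is a star with centre c and leaf set L
  (c \<notin> L, c adjacent to every leaf, no edges among leaves),
  i.e. it is isomorphic to K_{1,|L|} with c mapped to the centre.\<close>
definition induced_star :: "(nat set \<Rightarrow> bool) \<Rightarrow> nat \<Rightarrow> nat set \<Rightarrow> bool" where
  "induced_star G c L \<longleftrightarrow> c \<notin> L \<and> (\<forall>x\<in>L. adj G c x) \<and> (\<forall>x\<in>L. \<forall>y\<in>L. \<not> adj G x y)"

definition star_size :: "real \<Rightarrow> nat \<Rightarrow> int" where
  "star_size p n = \<lfloor>2 * log (1 / (1 - p)) (real n) - 8 * log (1 / (1 - p)) (ln (real n))\<rfloor>"

definition good_event :: "nat \<Rightarrow> real \<Rightarrow> (nat set \<Rightarrow> bool) \<Rightarrow> bool" where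
  "good_event n p G \<longleftrightarrow>
     (\<forall>A B. A \<subseteq> nbhd n G 1 \<and> B \<subseteq> {1..n} - {1} \<and> A \<inter> B = {} \<and>
        card A = nat \<lfloor>real n / (ln (real n))^2\<rfloor> \<and> card B = nat \<lfloor>real n / (ln (real n))^2\<rfloor> \<longrightarrow>
        (\<exists>c\<in>A. \<exists>L\<subseteq>B. card L = nat (star_size p n - 1) \<and> induced_star G c L))"

end

theory Submission
  imports Defs "HOL-Real_Asymp.Real_Asymp"
begin

text \<open>Put \<open>m = \<lfloor>n / ln\<^sup>2 n\<rfloor>\<close>, \<open>s = \<lfloor>p m / 2\<rfloor>\<close> and \<open>K = a - 1\<close>. It suffices that, with probability
  at least \<open>1 - 2 / n\<close>,
  \<^item> every \<open>s\<close>-set of vertices contains an independent \<open>K\<close>-set, and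
  \<^item> for all disjoint \<open>m\<close>-sets \<open>A\<close> and \<open>B\<close> some vertex of \<open>A\<close> has \<open>s\<close> neighbours in \<open>B\<close>;
  a centre in \<open>A\<close> together with an independent \<open>K\<close>-set among its neighbours in \<open>B\<close> is then the
  required induced star. For a fixed \<open>s\<close>-set the expected number of independent \<open>K\<close>-sets is
  \<open>\<mu> = (s choose K) (1 - p)^(K choose 2)\<close>, which the choice of \<open>a\<close> makes large compared with
  \<open>s ln n\<close>, and an extended Janson inequality (proved here from Harris' inequality) bounds the
  failure probability by \<open>exp (- 2 s ln n)\<close>, enough for a union bound over the \<open>n ^ s\<close> sets. If
  every vertex of \<open>A\<close> had fewer than \<open>s\<close> neighbours in \<open>B\<close>, only half of the expected \<open>p m\<^sup>2\<close>
  edges between them would be present; by Hoeffding's inequality this has probability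
  \<open>exp (- p\<^sup>2 m\<^sup>2 / 2)\<close>, which beats the \<open>n ^ (2 m)\<close> choices of \<open>A\<close> and \<open>B\<close>.\<close>

section \<open>Janson's inequality for independent bits\<close>

lemma measure_pair_pmf_Times:
  "measure_pmf.prob (pair_pmf M N) (A \<times> B) = measure_pmf.prob M A * measure_pmf.prob N B"
proof -
  have "measure_pmf.prob (pair_pmf M N) (A \<times> B) =
        measure_pmf.prob (pair_pmf M N) ((A \<times> B) \<inter> set_pmf (pair_pmf M N))"
    by (rule measure_Int_set_pmf[symmetric])
  also have "(A \<times> B) \<inter> set_pmf (pair_pmf M N) = (A \<inter> set_pmf M) \<times> (B \<inter> set_pmf N)"
    by (auto simp: set_pair_pmf)
  also have "measure_pmf.prob (pair_pmf M N) \<dots> =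
             measure_pmf.prob M (A \<inter> set_pmf M) * measure_pmf.prob N (B \<inter> set_pmf N)"
    by (intro measure_pmf_prob_product) (auto intro: countable_subset)
  finally show ?thesis by (simp add: measure_Int_set_pmf)
qed

definition all_absent :: "'a set \<Rightarrow> ('a \<Rightarrow> bool) set" where
  "all_absent T = {G. \<forall>e\<in>T. \<not> G e}"

definition erase :: "'a set \<Rightarrow> ('a \<Rightarrow> bool) \<Rightarrow> ('a \<Rightarrow> bool)" where
  "erase T G = (\<lambda>e. if e \<in> T then False else G e)"

definition no_all_absent :: "'i set \<Rightarrow> ('i \<Rightarrow> 'a set) \<Rightarrow> ('a \<Rightarrow> bool) set" where
  "no_all_absent F T = {G. \<forall>i\<in>F. \<exists>e\<in>T i. G e}"

lemma no_all_absent_antimono: "F' \<subseteq> F \<Longrightarrow> no_all_absent F T \<subseteq> no_all_absent F' T"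
  by (auto simp: no_all_absent_def)

lemma no_all_absent_insert: "no_all_absent (insert a F) T = no_all_absent F T - all_absent (T a)"
  by (auto simp: no_all_absent_def all_absent_def)

text \<open>Summed over all ordered pairs, this is the quantity \<open>\<Delta>\<close> of Janson's inequality for the
  events \<open>all_absent (T i)\<close>, each of probability \<open>q ^ card (T i)\<close>.\<close>
definition overlap_weight :: "real \<Rightarrow> ('i \<Rightarrow> 'a set) \<Rightarrow> 'i \<Rightarrow> 'i \<Rightarrow> real" where
  "overlap_weight q T i j = (if i \<noteq> j \<and> T i \<inter> T j \<noteq> {} then q ^ card (T i \<union> T j) else 0)"

lemma overlap_weight_nonneg: "0 \<le> q \<Longrightarrow> 0 \<le> overlap_weight q T i j"
  by (simp add: overlap_weight_def)

lemma sum_overlap_weight_eq: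
  assumes "finite F" "a \<notin> F"
  shows "(\<Sum>j\<in>F. overlap_weight q T a j) = (\<Sum>j\<in>{j\<in>F. T j \<inter> T a \<noteq> {}}. q ^ card (T a \<union> T j))"
proof -
  have "(\<Sum>j\<in>F. overlap_weight q T a j) = (\<Sum>j\<in>{j\<in>F. T j \<inter> T a \<noteq> {}}. overlap_weight q T a j)"
    using assms by (intro sum.mono_neutral_right) (auto simp: overlap_weight_def)
  also have "\<dots> = (\<Sum>j\<in>{j\<in>F. T j \<inter> T a \<noteq> {}}. q ^ card (T a \<union> T j))"
    using assms(2) by (intro sum.cong refl) (auto simp: overlap_weight_def)
  finally show ?thesis .
qed

lemma all_absent_Int_no_all_absent_subset:
  "all_absent (T a) \<inter> no_all_absent {j\<in>F. T j \<inter> T a = {}} T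
     \<subseteq> (no_all_absent F T \<inter> all_absent (T a))
       \<union> (\<Union>j\<in>{j\<in>F. T j \<inter> T a \<noteq> {}}. all_absent (T a \<union> T j) \<inter> no_all_absent {j\<in>F. T j \<inter> T a = {}} T)"
  (is "_ \<inter> ?N \<subseteq> _")
proof
  fix G assume G: "G \<in> all_absent (T a) \<inter> ?N"
  show "G \<in> (no_all_absent F T \<inter> all_absent (T a))
            \<union> (\<Union>j\<in>{j\<in>F. T j \<inter> T a \<noteq> {}}. all_absent (T a \<union> T j) \<inter> ?N)"
  proof (cases "G \<in> no_all_absent F T")
    case False
    then obtain j where "j \<in> F" "\<forall>e\<in>T j. \<not> G e" by (auto simp: no_all_absent_def)
    moreover from this have "T j \<inter> T a \<noteq> {}" using G by (auto simp: no_all_absent_def)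
    ultimately show ?thesis using G by (auto simp: all_absent_def)
  qed (use G in auto)
qed

lemma sum_overlap_weight_insert_ge:
  assumes "finite F" "a \<notin> F" "0 \<le> q"
  shows "(\<Sum>i\<in>F. \<Sum>j\<in>F. overlap_weight q T i j) + (\<Sum>j\<in>F. overlap_weight q T a j)
           \<le> (\<Sum>i\<in>insert a F. \<Sum>j\<in>insert a F. overlap_weight q T i j)"
  using assms by (simp add: sum.distrib sum_nonneg overlap_weight_nonneg add_increasing)

definition lin_minus_quad :: "'i set \<Rightarrow> ('i \<Rightarrow> real) \<Rightarrow> ('i \<Rightarrow> 'i \<Rightarrow> real) \<Rightarrow> ('i \<Rightarrow> real) \<Rightarrow> real" where
  "lin_minus_quad I w v x = (\<Sum>i\<in>I. x i * w i) - (\<Sum>i\<in>I. \<Sum>j\<in>I. x i * x j * v i j)"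

lemma lin_minus_quad_fun_upd:
  assumes "v a a = 0"
  shows "lin_minus_quad I w v (x(a := y)) =
           (1 - y) * lin_minus_quad I w v (x(a := 0)) + y * lin_minus_quad I w v (x(a := 1))"
proof -
  have lin: "(x(a:=y)) i * w i = (1 - y) * ((x(a:=0)) i * w i) + y * ((x(a:=1)) i * w i)" for i
    by (simp add: algebra_simps)
  have quad: "(x(a:=y)) i * (x(a:=y)) j * v i j =
      (1 - y) * ((x(a:=0)) i * (x(a:=0)) j * v i j) + y * ((x(a:=1)) i * (x(a:=1)) j * v i j)" for i j
    using assms by (cases "i = a"; cases "j = a") (simp_all add: algebra_simps)
  have lin_sum: "(\<Sum>i\<in>I. (x(a:=y)) i * w i) =
      (1 - y) * (\<Sum>i\<in>I. (x(a:=0)) i * w i) + y * (\<Sum>i\<in>I. (x(a:=1)) i * w i)"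
    unfolding lin by (simp add: sum.distrib sum_distrib_left)
  have quad_sum: "(\<Sum>i\<in>I. \<Sum>j\<in>I. (x(a:=y)) i * (x(a:=y)) j * v i j) =
      (1 - y) * (\<Sum>i\<in>I. \<Sum>j\<in>I. (x(a:=0)) i * (x(a:=0)) j * v i j)
      + y * (\<Sum>i\<in>I. \<Sum>j\<in>I. (x(a:=1)) i * (x(a:=1)) j * v i j)"
    unfolding quad by (simp add: sum.distrib sum_distrib_left)
  show ?thesis
    unfolding lin_minus_quad_def lin_sum quad_sum by (simp add: algebra_simps)
qed

text \<open>Since \<open>v\<close> vanishes on the diagonal, the form is affine in each coordinate, so moving a
  fractional coordinate to the better of \<open>0\<close> and \<open>1\<close> never decreases it.\<close>
lemma lin_minus_quad_le_indicator:
  assumes I: "finite I" and v: "\<And>i. v i i = 0" and x: "\<And>i. 0 \<le> x i \<and> x i \<le> 1"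
  shows "\<exists>F\<subseteq>I. lin_minus_quad I w v x \<le> lin_minus_quad I w v (\<lambda>i. if i \<in> F then 1 else 0)"
proof -
  let ?frac = "\<lambda>x. {i\<in>I. x i \<noteq> 0 \<and> x i \<noteq> 1}"
  let ?goal = "\<lambda>x. \<exists>F\<subseteq>I. lin_minus_quad I w v x \<le> lin_minus_quad I w v (\<lambda>i. if i \<in> F then 1 else 0)"
  have "?goal x" if "\<And>i. 0 \<le> x i \<and> x i \<le> 1" "card (?frac x) = k" for k x
    using that
  proof (induction k arbitrary: x rule: less_induct)
    case (less k x)
    show ?case
    proof (cases "?frac x = {}")
      case True
      define F where "F = {i\<in>I. x i = 1}"
      have "\<forall>i\<in>I. x i = (if i \<in> F then 1 else 0)" using True by (auto simp: F_def)
      then have "lin_minus_quad I w v x = lin_minus_quad I w v (\<lambda>i. if i \<in> F then 1 else 0)"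
        unfolding lin_minus_quad_def by (intro arg_cong2[where f = "(-)"] sum.cong refl) auto
      then show ?thesis by (intro exI[of _ F]) (auto simp: F_def)
    next
      case False
      then obtain a where a: "a \<in> I" "x a \<noteq> 0" "x a \<noteq> 1" by auto
      have vertex: "?goal (x(a := c))" if c: "c = 0 \<or> c = 1" for c
      proof (rule less.IH)
        have "?frac (x(a := c)) = ?frac x - {a}" using c by auto
        moreover have "card (?frac x - {a}) < card (?frac x)"
          using a I by (intro card_Diff1_less) auto
        ultimately show "card (?frac (x(a := c))) < k"
          using less.prems(2) by simp
      qed (use less.prems c in auto)
      have "lin_minus_quad I w v x =
            (1 - x a) * lin_minus_quad I w v (x(a := 0)) + x a * lin_minus_quad I w v (x(a := 1))"
        using lin_minus_quad_fun_upd[of v a I w x "x a"] v by simp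
      also have "\<dots> \<le> max (lin_minus_quad I w v (x(a := 0))) (lin_minus_quad I w v (x(a := 1)))"
        using less.prems(1)[of a] by (simp add: convex_bound_le)
      finally show ?thesis
        using vertex[of 0] vertex[of 1] by (auto simp: le_max_iff_disj intro: order_trans)
    qed
  qed
  then show ?thesis using x by blast
qed

lemma exists_subset_lin_minus_quad_ge:
  fixes w :: "'i \<Rightarrow> real"
  assumes I: "finite I" and v: "\<And>i. v i i = 0" and t: "0 \<le> t" "t \<le> 1"
  shows "\<exists>F\<subseteq>I. t * (\<Sum>i\<in>I. w i) - t\<^sup>2 * (\<Sum>i\<in>I. \<Sum>j\<in>I. v i j) \<le>
                 (\<Sum>i\<in>F. w i) - (\<Sum>i\<in>F. \<Sum>j\<in>F. v i j)"
proof -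
  obtain F where F: "F \<subseteq> I"
    and le: "lin_minus_quad I w v (\<lambda>_. t) \<le> lin_minus_quad I w v (\<lambda>i. if i \<in> F then 1 else 0)"
    using lin_minus_quad_le_indicator[where v = v and x = "\<lambda>_. t" and w = w, OF I v] t by blast
  let ?ind = "\<lambda>i. if i \<in> F then 1 else 0 :: real"
  have ind_sum: "(\<Sum>i\<in>I. ?ind i * f i) = (\<Sum>i\<in>F. f i)" for f :: "'i \<Rightarrow> real"
  proof -
    have "(\<Sum>i\<in>I. ?ind i * f i) = (\<Sum>i\<in>I. if i \<in> F then f i else 0)"
      by (intro sum.cong) auto
    also have "\<dots> = (\<Sum>i\<in>F. f i)"
      using F I by (simp add: sum.If_cases Int_absorb1)
    finally show ?thesis .
  qed
  have "(\<Sum>i\<in>I. \<Sum>j\<in>I. ?ind i * ?ind j * v i j) = (\<Sum>i\<in>I. ?ind i * (\<Sum>j\<in>I. ?ind j * v i j))"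
    by (simp add: sum_distrib_left mult.assoc)
  then have "lin_minus_quad I w v ?ind = (\<Sum>i\<in>F. w i) - (\<Sum>i\<in>F. \<Sum>j\<in>F. v i j)"
    unfolding lin_minus_quad_def ind_sum by simp
  moreover have "lin_minus_quad I w v (\<lambda>_. t) = t * (\<Sum>i\<in>I. w i) - t\<^sup>2 * (\<Sum>i\<in>I. \<Sum>j\<in>I. v i j)"
    by (simp add: lin_minus_quad_def sum_distrib_left power2_eq_square mult.assoc)
  ultimately show ?thesis using F le by auto
qed

context
  fixes E :: "'a set" and p :: real
  assumes finite_E: "finite E" and p_nonneg: "0 \<le> p" and p_le_1: "p \<le> 1"
begin

abbreviation bits :: "('a \<Rightarrow> bool) pmf" where
  "bits \<equiv> Pi_pmf E False (\<lambda>_. bernoulli_pmf p)"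

lemma prob_all_absent:
  assumes "T \<subseteq> E"
  shows "measure_pmf.prob bits (all_absent T) = (1 - p) ^ card T"
proof -
  have "all_absent T = Pi E (\<lambda>x. if x \<in> T then {False} else UNIV)"
    using assms by (auto simp: all_absent_def Pi_def)
  then have "measure_pmf.prob bits (all_absent T) =
             (\<Prod>x\<in>E. measure_pmf.prob (bernoulli_pmf p) (if x \<in> T then {False} else UNIV))"
    using finite_E by (simp add: measure_Pi_pmf_Pi)
  also have "\<dots> = (\<Prod>x\<in>E. if x \<in> T then 1 - p else 1)"
    by (intro prod.cong refl) (simp add: measure_pmf_single pmf_bernoulli_False p_nonneg p_le_1)
  also have "\<dots> = (1 - p) ^ card T"
    using finite_E assms by (simp add: prod.If_cases Int_absorb1)
  finally show ?thesis .
qed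

text \<open>Split the product measure into its \<open>T\<close>-part and its \<open>(E - T)\<close>-part.\<close>
lemma prob_all_absent_Int_erase_invariant:
  assumes T: "T \<subseteq> E" and Z: "\<And>G. G \<in> Z \<longleftrightarrow> erase T G \<in> Z"
  shows "measure_pmf.prob bits (all_absent T \<inter> Z) = (1 - p) ^ card T * measure_pmf.prob bits Z"
proof -
  define h :: "('a \<Rightarrow> bool) \<times> ('a \<Rightarrow> bool) \<Rightarrow> ('a \<Rightarrow> bool)"
    where "h = (\<lambda>(f, g) x. if x \<in> T then f x else g x)"
  have "Pi_pmf (T \<union> (E - T)) False (\<lambda>_. bernoulli_pmf p) =
        map_pmf h (pair_pmf (Pi_pmf T False (\<lambda>_. bernoulli_pmf p))
                            (Pi_pmf (E - T) False (\<lambda>_. bernoulli_pmf p)))"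
    unfolding h_def using finite_E T by (intro Pi_pmf_union) (auto intro: finite_subset)
  moreover have "T \<union> (E - T) = E" using T by blast
  ultimately have bits_split: "bits = map_pmf h (pair_pmf (Pi_pmf T False (\<lambda>_. bernoulli_pmf p))
                                                  (Pi_pmf (E - T) False (\<lambda>_. bernoulli_pmf p)))"
    by simp
  define Z' where "Z' = {g. erase T g \<in> Z}"
  have "h (f, g) \<in> Z \<longleftrightarrow> g \<in> Z'" for f g
  proof -
    have "erase T (h (f, g)) = erase T g"
      by (auto simp: erase_def h_def fun_eq_iff)
    then show ?thesis using Z[of "h (f, g)"] by (simp add: Z'_def)
  qed
  then have Z_h: "h -` Z = UNIV \<times> Z'"
    by auto
  have T_h: "h -` all_absent T = all_absent T \<times> UNIV"
    by (auto simp: all_absent_def h_def)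
  have "measure_pmf.prob bits (all_absent T \<inter> Z) =
        measure_pmf.prob bits (all_absent T) * measure_pmf.prob bits Z"
    unfolding bits_split measure_map_pmf vimage_Int Z_h T_h
    by (simp add: measure_pair_pmf_Times Times_Int_Times)
  then show ?thesis using prob_all_absent[OF T] by simp
qed

text \<open>A special case of Harris' inequality.\<close>
lemma prob_all_absent_Int_increasing_le:
  assumes T: "T \<subseteq> E" and Y: "\<And>G G'. G \<in> Y \<Longrightarrow> (\<And>e. G e \<Longrightarrow> G' e) \<Longrightarrow> G' \<in> Y"
  shows "measure_pmf.prob bits (all_absent T \<inter> Y) \<le> (1 - p) ^ card T * measure_pmf.prob bits Y"
proof -
  define Z where "Z = {G. erase T G \<in> Y}"
  have "G \<in> all_absent T \<Longrightarrow> erase T G = G" for G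
    by (auto simp: all_absent_def erase_def fun_eq_iff)
  then have "all_absent T \<inter> Y = all_absent T \<inter> Z"
    by (auto simp: Z_def)
  also have "measure_pmf.prob bits (all_absent T \<inter> Z) = (1 - p) ^ card T * measure_pmf.prob bits Z"
    by (rule prob_all_absent_Int_erase_invariant[OF T]) (simp add: Z_def erase_def cong: if_cong)
  also have "\<dots> \<le> (1 - p) ^ card T * measure_pmf.prob bits Y"
    using Y p_le_1
    by (intro mult_left_mono measure_pmf.finite_measure_mono) (auto simp: Z_def erase_def)
  finally show ?thesis .
qed

text \<open>The events given by sets disjoint from \<open>T a\<close> are independent of \<open>all_absent (T a)\<close>; the
  overlapping ones are removed by a union bound and Harris' inequality.\<close>
lemma prob_no_all_absent_Int_all_absent_ge:
  assumes F: "finite F" and a: "a \<notin> F" and T: "\<And>i. i \<in> insert a F \<Longrightarrow> T i \<subseteq> E"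
  shows "measure_pmf.prob bits (no_all_absent {j\<in>F. T j \<inter> T a = {}} T)
           * ((1 - p) ^ card (T a) - (\<Sum>j\<in>F. overlap_weight (1 - p) T a j))
         \<le> measure_pmf.prob bits (no_all_absent F T \<inter> all_absent (T a))"
proof -
  define C where "C = no_all_absent F T"
  define N where "N = no_all_absent {j\<in>F. T j \<inter> T a = {}} T"
  define Ov where "Ov = {j\<in>F. T j \<inter> T a \<noteq> {}}"
  define \<delta> where "\<delta> = (\<Sum>j\<in>F. overlap_weight (1 - p) T a j)"
  have N_erase: "G \<in> N \<longleftrightarrow> erase (T a) G \<in> N" for G
  proof -
    have "\<forall>j\<in>{j\<in>F. T j \<inter> T a = {}}. \<forall>e\<in>T j. erase (T a) G e = G e"
      by (auto simp: erase_def)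
    then show ?thesis unfolding N_def no_all_absent_def by blast
  qed
  have N_up: "\<And>G G'. G \<in> N \<Longrightarrow> (\<And>e. G e \<Longrightarrow> G' e) \<Longrightarrow> G' \<in> N"
    unfolding N_def no_all_absent_def by blast
  have \<delta>_Ov: "\<delta> = (\<Sum>j\<in>Ov. (1 - p) ^ card (T a \<union> T j))"
    unfolding \<delta>_def Ov_def using F a by (rule sum_overlap_weight_eq)
  have cover: "all_absent (T a) \<inter> N \<subseteq> (C \<inter> all_absent (T a)) \<union> (\<Union>j\<in>Ov. all_absent (T a \<union> T j) \<inter> N)"
    unfolding C_def N_def Ov_def by (rule all_absent_Int_no_all_absent_subset)
  have "(1 - p) ^ card (T a) * measure_pmf.prob bits N = measure_pmf.prob bits (all_absent (T a) \<inter> N)"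
    using T by (intro prob_all_absent_Int_erase_invariant[symmetric] N_erase) auto
  also have "\<dots> \<le> measure_pmf.prob bits (C \<inter> all_absent (T a))
                  + measure_pmf.prob bits (\<Union>j\<in>Ov. all_absent (T a \<union> T j) \<inter> N)"
    by (rule order_trans[OF measure_pmf.finite_measure_mono[OF cover] measure_Un_le]) simp_all
  also have "\<dots> \<le> measure_pmf.prob bits (C \<inter> all_absent (T a))
                  + (\<Sum>j\<in>Ov. measure_pmf.prob bits (all_absent (T a \<union> T j) \<inter> N))"
    using F by (intro add_left_mono measure_pmf.finite_measure_subadditive_finite)
      (auto simp: Ov_def)
  also have "\<dots> \<le> measure_pmf.prob bits (C \<inter> all_absent (T a)) + \<delta> * measure_pmf.prob bits N"
  proof -
    have "measure_pmf.prob bits (all_absent (T a \<union> T j) \<inter> N)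
            \<le> (1 - p) ^ card (T a \<union> T j) * measure_pmf.prob bits N" if "j \<in> Ov" for j
    proof (rule prob_all_absent_Int_increasing_le)
      show "T a \<union> T j \<subseteq> E" using T that by (auto simp: Ov_def)
    qed (fact N_up)
    then show ?thesis
      unfolding \<delta>_Ov sum_distrib_right by (intro add_left_mono sum_mono)
  qed
  finally show ?thesis
    unfolding C_def N_def \<delta>_def by (simp add: algebra_simps)
qed

lemma janson_step:
  assumes F: "finite F" and a: "a \<notin> F" and T: "\<And>i. i \<in> insert a F \<Longrightarrow> T i \<subseteq> E"
  shows "measure_pmf.prob bits (no_all_absent F T)
           * ((1 - p) ^ card (T a) - (\<Sum>j\<in>F. overlap_weight (1 - p) T a j))
         \<le> measure_pmf.prob bits (no_all_absent F T \<inter> all_absent (T a))"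
proof (cases "0 \<le> (1 - p) ^ card (T a) - (\<Sum>j\<in>F. overlap_weight (1 - p) T a j)")
  case True
  have "measure_pmf.prob bits (no_all_absent F T) \<le> measure_pmf.prob bits (no_all_absent {j\<in>F. T j \<inter> T a = {}} T)"
    by (intro measure_pmf.finite_measure_mono no_all_absent_antimono) auto
  from mult_right_mono[OF this True] show ?thesis
    using prob_no_all_absent_Int_all_absent_ge[where T = T, OF assms] by linarith
next
  case False
  then have "measure_pmf.prob bits (no_all_absent F T)
               * ((1 - p) ^ card (T a) - (\<Sum>j\<in>F. overlap_weight (1 - p) T a j)) \<le> 0"
    by (simp add: mult_nonneg_nonpos)
  then show ?thesis
    using measure_nonneg[of bits "no_all_absent F T \<inter> all_absent (T a)"] by linarith
qed

lemma janson_inequality: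
  assumes "finite F" and "\<And>i. i \<in> F \<Longrightarrow> T i \<subseteq> E"
  shows "measure_pmf.prob bits (no_all_absent F T) \<le>
           exp (- (\<Sum>i\<in>F. (1 - p) ^ card (T i)) + (\<Sum>i\<in>F. \<Sum>j\<in>F. overlap_weight (1 - p) T i j))"
  using assms
proof (induction F rule: finite_induct)
  case empty
  show ?case by (simp add: no_all_absent_def)
next
  case (insert a F)
  define q where "q = 1 - p"
  define \<delta> where "\<delta> = (\<Sum>j\<in>F. overlap_weight q T a j)"
  have "measure_pmf.prob bits (no_all_absent (insert a F) T) =
        measure_pmf.prob bits (no_all_absent F T) - measure_pmf.prob bits (no_all_absent F T \<inter> all_absent (T a))"
    by (simp add: no_all_absent_insert measure_pmf.finite_measure_Diff')
  also have "\<dots> \<le> measure_pmf.prob bits (no_all_absent F T) * (1 + (- (q ^ card (T a)) + \<delta>))"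
    using janson_step[OF insert.hyps, of T] insert.prems by (simp add: q_def \<delta>_def algebra_simps)
  also have "\<dots> \<le> measure_pmf.prob bits (no_all_absent F T) * exp (- (q ^ card (T a)) + \<delta>)"
    by (intro mult_left_mono exp_ge_add_one_self) simp
  also have "\<dots> \<le> exp (- (\<Sum>i\<in>F. q ^ card (T i)) + (\<Sum>i\<in>F. \<Sum>j\<in>F. overlap_weight q T i j))
                  * exp (- (q ^ card (T a)) + \<delta>)"
    using insert by (intro mult_right_mono) (simp_all add: q_def)
  also have "\<dots> = exp (- (\<Sum>i\<in>insert a F. q ^ card (T i))
                      + ((\<Sum>i\<in>F. \<Sum>j\<in>F. overlap_weight q T i j) + \<delta>))"
    using insert.hyps by (simp add: exp_add[symmetric] algebra_simps)
  also have "\<dots> \<le> exp (- (\<Sum>i\<in>insert a F. q ^ card (T i))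
                      + (\<Sum>i\<in>insert a F. \<Sum>j\<in>insert a F. overlap_weight q T i j))"
    using sum_overlap_weight_insert_ge[OF insert.hyps, of q T] p_le_1 by (simp add: q_def \<delta>_def)
  finally show ?case by (simp add: q_def)
qed

lemma janson_inequality_scaled:
  assumes F: "finite F" and T: "\<And>i. i \<in> F \<Longrightarrow> T i \<subseteq> E" and t: "0 \<le> t" "t \<le> 1"
  defines "\<mu> \<equiv> (\<Sum>i\<in>F. (1 - p) ^ card (T i))"
    and "\<Delta> \<equiv> (\<Sum>i\<in>F. \<Sum>j\<in>F. overlap_weight (1 - p) T i j)"
  shows "measure_pmf.prob bits (no_all_absent F T) \<le> exp (- (t * \<mu> - t\<^sup>2 * \<Delta>))"
proof -
  obtain F' where F': "F' \<subseteq> F"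
    and F'_ge: "t * \<mu> - t\<^sup>2 * \<Delta> \<le> (\<Sum>i\<in>F'. (1 - p) ^ card (T i))
                                   - (\<Sum>i\<in>F'. \<Sum>j\<in>F'. overlap_weight (1 - p) T i j)"
    using exists_subset_lin_minus_quad_ge[OF F, of "overlap_weight (1 - p) T" t] t
    unfolding \<mu>_def \<Delta>_def by (auto simp: overlap_weight_def)
  have "measure_pmf.prob bits (no_all_absent F T) \<le> measure_pmf.prob bits (no_all_absent F' T)"
    using F' by (intro measure_pmf.finite_measure_mono no_all_absent_antimono) auto
  also have "\<dots> \<le> exp (- (\<Sum>i\<in>F'. (1 - p) ^ card (T i))
                      + (\<Sum>i\<in>F'. \<Sum>j\<in>F'. overlap_weight (1 - p) T i j))"
    using F F' T by (intro janson_inequality) (auto intro: finite_subset)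
  also have "\<dots> \<le> exp (- (t * \<mu> - t\<^sup>2 * \<Delta>))"
    using F'_ge by simp
  finally show ?thesis .
qed

text \<open>Optimising \<open>t\<close> above gives \<open>exp (- \<mu>\<^sup>2 / (4 * \<Delta>))\<close> when \<open>\<mu> < 2 * \<Delta>\<close> and \<open>exp (- \<mu> / 2)\<close> otherwise.\<close>
lemma janson_inequality_extended:
  assumes F: "finite F" and T: "\<And>i. i \<in> F \<Longrightarrow> T i \<subseteq> E"
  defines "\<mu> \<equiv> (\<Sum>i\<in>F. (1 - p) ^ card (T i))"
    and "\<Delta> \<equiv> (\<Sum>i\<in>F. \<Sum>j\<in>F. overlap_weight (1 - p) T i j)"
  assumes X: "0 \<le> X" "2 * X \<le> \<mu>" "4 * \<Delta> * X \<le> \<mu>\<^sup>2"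
  shows "measure_pmf.prob bits (no_all_absent F T) \<le> exp (- X)"
proof (cases "2 * \<Delta> \<le> \<mu>")
  case True
  have "measure_pmf.prob bits (no_all_absent F T) \<le> exp (- (1 * \<mu> - 1\<^sup>2 * \<Delta>))"
    unfolding \<mu>_def \<Delta>_def by (rule janson_inequality_scaled[OF F T]) auto
  also have "\<dots> \<le> exp (- X)" using True X by simp
  finally show ?thesis .
next
  case False
  have "0 \<le> \<Delta>"
    unfolding \<Delta>_def using p_le_1 by (intro sum_nonneg overlap_weight_nonneg) auto
  with False X have \<Delta>: "0 < \<Delta>" "\<mu> < 2 * \<Delta>" by auto
  define t where "t = \<mu> / (2 * \<Delta>)"
  have "measure_pmf.prob bits (no_all_absent F T) \<le> exp (- (t * \<mu> - t\<^sup>2 * \<Delta>))"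
    unfolding \<mu>_def \<Delta>_def
    by (rule janson_inequality_scaled[OF F T]) (use \<Delta> X in \<open>auto simp: t_def \<mu>_def \<Delta>_def\<close>)
  also have "t * \<mu> - t\<^sup>2 * \<Delta> = \<mu>\<^sup>2 / (4 * \<Delta>)"
    using \<Delta> by (simp add: t_def field_simps power2_eq_square)
  also have "exp (- (\<mu>\<^sup>2 / (4 * \<Delta>))) \<le> exp (- X)"
    using X \<Delta> by (simp add: field_simps)
  finally show ?thesis .
qed

end

section \<open>Independent sets and edges between two sets in \<open>G(n,p)\<close>\<close>

definition edges_in :: "nat set \<Rightarrow> nat set set" where
  "edges_in I = {e. e \<subseteq> I \<and> card e = 2}"

definition independent_set :: "(nat set \<Rightarrow> bool) \<Rightarrow> nat set \<Rightarrow> bool" where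
  "independent_set G L \<longleftrightarrow> (\<forall>x\<in>L. \<forall>y\<in>L. \<not> adj G x y)"

lemma finite_pairs: "finite (pairs n)"
proof -
  have "pairs n \<subseteq> Pow {1..n}" by (auto simp: pairs_def)
  then show ?thesis by (rule finite_subset) simp
qed

lemma edges_in_subset_pairs:
  assumes "I \<subseteq> {1..n}"
  shows "edges_in I \<subseteq> pairs n"
proof
  fix e assume "e \<in> edges_in I"
  then obtain u v where uv: "e = {u, v}" "u \<noteq> v" "e \<subseteq> I"
    by (auto simp: edges_in_def card_2_iff)
  then have "u \<in> {1..n}" "v \<in> {1..n}" using assms by auto
  with uv show "e \<in> pairs n" unfolding pairs_def by blast
qed

lemma finite_edges_in: "finite I \<Longrightarrow> finite (edges_in I)"
  by (simp add: edges_in_def)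

lemma card_edges_in: "finite I \<Longrightarrow> card (edges_in I) = card I choose 2"
  unfolding edges_in_def by (rule n_subsets)

lemma edges_in_Int: "edges_in I \<inter> edges_in J = edges_in (I \<inter> J)"
  by (auto simp: edges_in_def)

lemma edges_in_eq_empty_iff: "finite A \<Longrightarrow> edges_in A = {} \<longleftrightarrow> card A < 2"
proof
  assume "edges_in A = {}"
  show "card A < 2"
  proof (rule ccontr)
    assume "\<not> card A < 2"
    then obtain B where "B \<subseteq> A" "card B = 2" using obtain_subset_with_card_n[of 2 A] by auto
    then show False using \<open>edges_in A = {}\<close> by (auto simp: edges_in_def)
  qed
next
  assume "finite A" "card A < 2"
  then show "edges_in A = {}"
    by (auto simp: edges_in_def dest: card_mono)
qed

text \<open>The ratio \<open>\<Delta> / \<mu>\<close> in Janson's inequality for the events that the \<open>K\<close>-subsets of an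
  \<open>s\<close>-set span no edge; \<open>i\<close> is the size of the intersection of two such subsets.\<close>
definition overlap_ratio :: "real \<Rightarrow> nat \<Rightarrow> nat \<Rightarrow> real" where
  "overlap_ratio q s K =
     (\<Sum>i\<in>{2..<K}. real (K choose i) * real ((s - K) choose (K - i)) * q ^ ((K choose 2) - (i choose 2)))"

lemma card_subsets_with_overlap_le:
  assumes S: "finite S" and I: "I \<subseteq> S" "card I = K"
  shows "card {J. J \<subseteq> S \<and> card J = K \<and> card (I \<inter> J) = i} \<le> (K choose i) * ((card S - K) choose (K - i))"
proof -
  define h where "h = (\<lambda>J. (I \<inter> J, J - I))"
  have fin_I: "finite I" using S I finite_subset by blast
  have "inj_on h {J. J \<subseteq> S \<and> card J = K \<and> card (I \<inter> J) = i}"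
    by (rule inj_onI) (auto simp: h_def)
  moreover have "h ` {J. J \<subseteq> S \<and> card J = K \<and> card (I \<inter> J) = i}
                   \<subseteq> {B. B \<subseteq> I \<and> card B = i} \<times> {B. B \<subseteq> S - I \<and> card B = K - i}"
  proof
    fix x assume "x \<in> h ` {J. J \<subseteq> S \<and> card J = K \<and> card (I \<inter> J) = i}"
    then obtain J where J: "J \<subseteq> S" "card J = K" "card (I \<inter> J) = i" "x = h J" by auto
    then have "card (J - I) = K - i"
      using S by (simp add: card_Diff_subset_Int Int_commute finite_subset)
    with J show "x \<in> {B. B \<subseteq> I \<and> card B = i} \<times> {B. B \<subseteq> S - I \<and> card B = K - i}"
      by (auto simp: h_def)
  qed
  then have "card (h ` {J. J \<subseteq> S \<and> card J = K \<and> card (I \<inter> J) = i})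
               \<le> card ({B. B \<subseteq> I \<and> card B = i} \<times> {B. B \<subseteq> S - I \<and> card B = K - i})"
    using fin_I S by (intro card_mono) auto
  ultimately show ?thesis
    using fin_I S I by (simp add: card_image card_cartesian_product n_subsets card_Diff_subset)
qed

lemma overlap_weight_edges_in:
  assumes I: "finite I" "card I = K" and J: "finite J" "card J = K"
  shows "overlap_weight q edges_in I J =
           (if 2 \<le> card (I \<inter> J) \<and> card (I \<inter> J) < K
            then q ^ (K choose 2) * q ^ ((K choose 2) - (card (I \<inter> J) choose 2)) else 0)"
proof -
  have overlap_le: "card (I \<inter> J) \<le> K" using I card_mono[OF I(1), of "I \<inter> J"] by simp
  then consider "card (I \<inter> J) < 2" | "card (I \<inter> J) = K" | "2 \<le> card (I \<inter> J)" "card (I \<inter> J) < K"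
    by linarith
  then show ?thesis
  proof cases
    case 1
    then have "edges_in I \<inter> edges_in J = {}"
      using I by (simp add: edges_in_Int edges_in_eq_empty_iff)
    then show ?thesis using 1 by (simp add: overlap_weight_def)
  next
    case 2
    then have "I = J" using I J by (metis Int_lower1 Int_lower2 card_subset_eq)
    then show ?thesis using 2 by (simp add: overlap_weight_def)
  next
    case 3
    have "card (edges_in I) + card (edges_in J) = card (edges_in I \<union> edges_in J) + card (edges_in (I \<inter> J))"
      using card_Un_Int[OF finite_edges_in[OF I(1)] finite_edges_in[OF J(1)]] by (simp add: edges_in_Int)
    then have "(K choose 2) + (K choose 2) = card (edges_in I \<union> edges_in J) + (card (I \<inter> J) choose 2)"
      using I J by (simp add: card_edges_in)
    moreover have "(card (I \<inter> J) choose 2) \<le> (K choose 2)"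
      using overlap_le by (rule binomial_right_mono)
    ultimately have "card (edges_in I \<union> edges_in J) = (K choose 2) + ((K choose 2) - (card (I \<inter> J) choose 2))"
      by linarith
    moreover have "edges_in I \<inter> edges_in J \<noteq> {}" "I \<noteq> J"
      using I 3 by (auto simp: edges_in_Int edges_in_eq_empty_iff)
    ultimately show ?thesis using 3 by (simp add: overlap_weight_def power_add)
  qed
qed

lemma sum_overlap_weight_edges_in_le:
  assumes S: "finite S" and I: "I \<subseteq> S" "card I = K" and q: "0 \<le> q"
  shows "(\<Sum>J\<in>{J. J \<subseteq> S \<and> card J = K}. overlap_weight q edges_in I J)
           \<le> q ^ (K choose 2) * overlap_ratio q (card S) K"
proof -
  define F where "F = {J. J \<subseteq> S \<and> card J = K}"
  define val where "val i = (if 2 \<le> i \<and> i < K then q ^ (K choose 2) * q ^ ((K choose 2) - (i choose 2)) else 0)"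
    for i
  have "overlap_weight q edges_in I J = val (card (I \<inter> J))" if "J \<in> F" for J
  proof -
    have "finite I" "finite J" using S I that by (auto simp: F_def intro: finite_subset)
    then show ?thesis
      using overlap_weight_edges_in[of I K J q] I that by (simp add: F_def val_def)
  qed
  then have "(\<Sum>J\<in>F. overlap_weight q edges_in I J) = (\<Sum>J\<in>F. val (card (I \<inter> J)))"
    by (rule sum.cong[OF refl])
  also have "\<dots> = (\<Sum>i\<in>{0..K}. \<Sum>J\<in>{J\<in>F. card (I \<inter> J) = i}. val (card (I \<inter> J)))"
    using S I by (intro sum.group[symmetric]) (auto simp: F_def card_mono finite_subset)
  also have "\<dots> = (\<Sum>i\<in>{0..K}. real (card {J\<in>F. card (I \<inter> J) = i}) * val i)"
    by simp
  also have "\<dots> \<le> (\<Sum>i\<in>{0..K}. real ((K choose i) * ((card S - K) choose (K - i))) * val i)"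
    using card_subsets_with_overlap_le[OF S I] q
    by (intro sum_mono mult_right_mono) (auto simp: F_def val_def conj_assoc simp flip: of_nat_mult)
  also have "\<dots> = (\<Sum>i\<in>{2..<K}. real ((K choose i) * ((card S - K) choose (K - i))) * val i)"
    by (intro sum.mono_neutral_right) (auto simp: val_def)
  also have "\<dots> = q ^ (K choose 2) * overlap_ratio q (card S) K"
    by (simp add: overlap_ratio_def val_def sum_distrib_left algebra_simps)
  finally show ?thesis by (simp add: F_def)
qed

lemma no_independent_subset_imp_no_all_absent:
  "{G. \<not> (\<exists>L\<subseteq>S. card L = K \<and> independent_set G L)} \<subseteq> no_all_absent {J. J \<subseteq> S \<and> card J = K} edges_in"
proof
  fix G assume G: "G \<in> {G. \<not> (\<exists>L\<subseteq>S. card L = K \<and> independent_set G L)}"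
  show "G \<in> no_all_absent {J. J \<subseteq> S \<and> card J = K} edges_in"
    unfolding no_all_absent_def
  proof (intro CollectI ballI)
    fix I assume "I \<in> {J. J \<subseteq> S \<and> card J = K}"
    with G obtain x y where "x \<in> I" "y \<in> I" "adj G x y" by (auto simp: independent_set_def)
    then have "{x, y} \<in> edges_in I" "G {x, y}" by (auto simp: adj_def edges_in_def)
    then show "\<exists>e\<in>edges_in I. G e" by blast
  qed
qed

lemma prob_no_independent_set_le:
  fixes K s :: nat and X :: real
  assumes p: "0 \<le> p" "p \<le> 1" and S: "S \<subseteq> {1..n}" "card S = s"
  defines "\<mu> \<equiv> real (s choose K) * (1 - p) ^ (K choose 2)"
  assumes X: "0 \<le> X" "2 * X \<le> \<mu>" "4 * overlap_ratio (1 - p) s K * X \<le> \<mu>"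
  shows "measure_pmf.prob (Gnp n p) {G. \<not> (\<exists>L\<subseteq>S. card L = K \<and> independent_set G L)} \<le> exp (- X)"
proof -
  define F where "F = {J. J \<subseteq> S \<and> card J = K}"
  define \<Delta> where "\<Delta> = (\<Sum>I\<in>F. \<Sum>J\<in>F. overlap_weight (1 - p) edges_in I J)"
  have fin_S: "finite S" using S finite_subset by blast
  have "measure_pmf.prob (Gnp n p) {G. \<not> (\<exists>L\<subseteq>S. card L = K \<and> independent_set G L)}
          \<le> measure_pmf.prob (Gnp n p) (no_all_absent F edges_in)"
    unfolding F_def by (intro measure_pmf.finite_measure_mono no_independent_subset_imp_no_all_absent) simp
  also have "\<dots> \<le> exp (- X)"
    unfolding Gnp_def
  proof (rule janson_inequality_extended[OF finite_pairs p])
    show "finite F" using fin_S by (simp add: F_def)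
    show "edges_in I \<subseteq> pairs n" if "I \<in> F" for I
      using that S by (intro edges_in_subset_pairs) (auto simp: F_def)
    have "(\<Sum>I\<in>F. (1 - p) ^ card (edges_in I)) = (\<Sum>I\<in>F. (1 - p) ^ (K choose 2))"
      using card_edges_in[OF rev_finite_subset[OF fin_S]] by (intro sum.cong refl) (auto simp: F_def)
    then have \<mu>_eq: "(\<Sum>I\<in>F. (1 - p) ^ card (edges_in I)) = \<mu>"
      using fin_S S by (simp add: F_def \<mu>_def n_subsets)
    then show "0 \<le> X" "2 * X \<le> (\<Sum>I\<in>F. (1 - p) ^ card (edges_in I))" using X by auto
    have "\<Delta> \<le> (\<Sum>I\<in>F. (1 - p) ^ (K choose 2) * overlap_ratio (1 - p) s K)"
      unfolding \<Delta>_def using fin_S S p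
      by (intro sum_mono) (auto simp: F_def intro!: sum_overlap_weight_edges_in_le[THEN order_trans])
    also have "\<dots> = \<mu> * overlap_ratio (1 - p) s K"
      using fin_S S by (simp add: F_def \<mu>_def n_subsets)
    finally have "4 * \<Delta> * X \<le> 4 * (\<mu> * overlap_ratio (1 - p) s K) * X"
      using X by (intro mult_right_mono) auto
    also have "\<dots> = \<mu> * (4 * overlap_ratio (1 - p) s K * X)"
      by (simp add: algebra_simps)
    also have "\<dots> \<le> \<mu>\<^sup>2"
      using X by (simp add: power2_eq_square mult_left_mono)
    finally show "4 * (\<Sum>I\<in>F. \<Sum>J\<in>F. overlap_weight (1 - p) edges_in I J) * X
                    \<le> (\<Sum>I\<in>F. (1 - p) ^ card (edges_in I))\<^sup>2"
      by (simp add: \<mu>_eq \<Delta>_def)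
  qed
  finally show ?thesis .
qed

definition edges_between :: "nat set \<Rightarrow> nat set \<Rightarrow> nat set set" where
  "edges_between A B = (\<lambda>(a, b). {a, b}) ` (A \<times> B)"

lemma card_edges_between:
  assumes "finite A" "finite B" "A \<inter> B = {}"
  shows "card (edges_between A B) = card A * card B"
proof -
  have "inj_on (\<lambda>(a, b). {a, b :: nat}) (A \<times> B)"
    using assms(3) by (auto simp: inj_on_def doubleton_eq_iff)
  then show ?thesis
    using assms by (simp add: edges_between_def card_image card_cartesian_product)
qed

lemma edges_between_subset_pairs:
  assumes "A \<subseteq> {1..n}" "B \<subseteq> {1..n}" "A \<inter> B = {}"
  shows "edges_between A B \<subseteq> pairs n"
proof
  fix e assume "e \<in> edges_between A B"
  then obtain a b where "e = {a, b}" "a \<in> A" "b \<in> B"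
    by (auto simp: edges_between_def)
  with assms show "e \<in> pairs n" unfolding pairs_def by blast
qed

lemma card_present_edges_between_le:
  assumes "finite A" "B \<subseteq> {1..n}" "A \<inter> B = {}"
  shows "card {e\<in>edges_between A B. G e} \<le> (\<Sum>c\<in>A. card (nbhd n G c \<inter> B))"
proof -
  have "{e\<in>edges_between A B. G e} = (\<Union>c\<in>A. (\<lambda>b. {c, b}) ` (nbhd n G c \<inter> B))"
  proof safe
    fix e assume "e \<in> edges_between A B" "G e"
    then obtain a b where ab: "a \<in> A" "b \<in> B" "e = {a, b}" by (auto simp: edges_between_def)
    then have "b \<in> nbhd n G a" using assms(2,3) \<open>G e\<close> by (auto simp: nbhd_def adj_def)
    then show "e \<in> (\<Union>c\<in>A. (\<lambda>b. {c, b}) ` (nbhd n G c \<inter> B))" using ab by blast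
  next
    fix c b assume "c \<in> A" "b \<in> nbhd n G c" "b \<in> B"
    then show "{c, b} \<in> edges_between A B" "G {c, b}" by (auto simp: edges_between_def nbhd_def adj_def)
  qed
  also have "card \<dots> \<le> (\<Sum>c\<in>A. card ((\<lambda>b. {c, b}) ` (nbhd n G c \<inter> B)))"
    using assms(1) by (rule card_UN_le)
  also have "\<dots> \<le> (\<Sum>c\<in>A. card (nbhd n G c \<inter> B))"
    by (intro sum_mono card_image_le) (simp add: nbhd_def)
  finally show ?thesis .
qed

lemma count_edges_Gnp:
  assumes p: "0 \<le> p" "p \<le> 1" and P: "P \<subseteq> pairs n"
  shows "map_pmf (\<lambda>G. card {e\<in>P. G e}) (Gnp n p) = binomial_pmf (card P) p"
proof -
  have "binomial_pmf (card P) p = map_pmf (\<lambda>f. card {x\<in>P. f x}) (Pi_pmf P False (\<lambda>_. bernoulli_pmf p))"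
    using P finite_pairs p by (intro binomial_pmf_altdef') (auto intro: finite_subset)
  also have "Pi_pmf P False (\<lambda>_. bernoulli_pmf p) = map_pmf (\<lambda>f x. if x \<in> P then f x else False) (Gnp n p)"
    unfolding Gnp_def by (rule Pi_pmf_subset[OF finite_pairs P])
  finally show ?thesis
    by (simp add: map_pmf_comp conj_commute cong: conj_cong)
qed

text \<open>Otherwise at most \<open>m s \<le> p m\<^sup>2 / 2\<close> edges between \<open>A\<close> and \<open>B\<close> are present, half the expected
  number; Hoeffding's inequality bounds the probability of this.\<close>
lemma prob_few_neighbours_le:
  assumes p: "0 < p" "p < 1" and A: "A \<subseteq> {1..n}" "card A = m" and B: "B \<subseteq> {1..n}" "card B = m"
    and AB: "A \<inter> B = {}" and m: "m > 0" and s: "2 * real s \<le> p * m"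
  shows "measure_pmf.prob (Gnp n p) {G. \<forall>c\<in>A. card (nbhd n G c \<inter> B) < s} \<le> exp (- (p\<^sup>2 * (real m)\<^sup>2 / 2))"
proof -
  define P where "P = edges_between A B"
  define t where "t = p * (real m)\<^sup>2 / 2"
  have fin: "finite A" "finite B" using A B finite_subset by auto
  have card_P: "card P = m * m" using fin AB A B by (simp add: P_def card_edges_between)
  have few_edges: "real (card {e\<in>P. G e}) \<le> real (card P) * p - t"
    if G: "\<forall>c\<in>A. card (nbhd n G c \<inter> B) < s" for G
  proof -
    have "card {e\<in>P. G e} \<le> (\<Sum>c\<in>A. card (nbhd n G c \<inter> B))"
      unfolding P_def using fin B AB by (intro card_present_edges_between_le)
    also have "\<dots> \<le> m * s"
      using sum_mono[of A "\<lambda>c. card (nbhd n G c \<inter> B)" "\<lambda>_. s"] G A by fastforce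
    finally have "real (card {e\<in>P. G e}) \<le> real m * real s" by (simp flip: of_nat_mult)
    also have "\<dots> \<le> real m * (p * m / 2)" using s by (intro mult_left_mono) auto
    finally show ?thesis using card_P by (simp add: t_def power2_eq_square field_simps)
  qed
  have "measure_pmf.prob (Gnp n p) {G. \<forall>c\<in>A. card (nbhd n G c \<inter> B) < s}
        \<le> measure_pmf.prob (Gnp n p) ((\<lambda>G. card {e\<in>P. G e}) -` {x. real x \<le> real (card P) * p - t})"
    using few_edges by (intro measure_pmf.finite_measure_mono) auto
  also have "\<dots> = measure_pmf.prob (map_pmf (\<lambda>G. card {e\<in>P. G e}) (Gnp n p)) {x. real x \<le> real (card P) * p - t}"
    by (rule measure_map_pmf[symmetric])
  also have "\<dots> = measure_pmf.prob (binomial_pmf (card P) p) {x. real x \<le> real (card P) * p - t}"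
    using A B AB p by (simp add: count_edges_Gnp P_def edges_between_subset_pairs)
  also have "\<dots> \<le> exp (-2 * t\<^sup>2 / card P)"
  proof (rule binomial_distribution.prob_le)
    show "binomial_distribution p" by unfold_locales (use p in auto)
  qed (use card_P m p in \<open>auto simp: t_def\<close>)
  also have "-2 * t\<^sup>2 / card P = - (p\<^sup>2 * (real m)\<^sup>2 / 2)"
    using card_P m by (simp add: t_def power2_eq_square field_simps)
  finally show ?thesis .
qed

section \<open>Binomial estimates\<close>

lemma real_choose_two: "real (n choose 2) = real n * (real n - 1) / 2"
proof -
  have "even (n * (n - 1))" by (cases "even n") auto
  hence "real (n * (n - 1) div 2) = real (n * (n - 1)) / 2" by (simp add: real_of_nat_div)
  thus ?thesis by (cases n) (auto simp: choose_two algebra_simps)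
qed

lemma pow_choose_two_eq_powr:
  assumes "0 < q"
  shows "q ^ (k choose 2) = (q powr ((real k - 1) / 2)) ^ k"
proof -
  have "q ^ (k choose 2) = q powr (real k * ((real k - 1) / 2))"
    using assms by (simp add: powr_realpow[symmetric] real_choose_two)
  also have "\<dots> = (q powr ((real k - 1) / 2)) ^ k"
    using assms by (simp add: powr_power)
  finally show ?thesis .
qed

lemma fact_mult_pow_le_fact_add: "real (fact a) * (real a + 1) ^ k \<le> real (fact (a + k))"
proof (induction k)
  case 0 then show ?case by simp
next
  case (Suc k)
  have "real (fact a) * (real a + 1) ^ Suc k = (real (fact a) * (real a + 1) ^ k) * (real a + 1)" by simp
  also have "\<dots> \<le> real (fact (a + k)) * (real (a + k) + 1)"
    using Suc by (intro mult_mono) auto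
  also have "\<dots> = real (fact (a + Suc k))" by (simp add: algebra_simps)
  finally show ?case .
qed

lemma fact_add_le_fact_mult_pow: "real (fact (a + k)) \<le> real (fact a) * (real (a + k)) ^ k"
proof (induction k)
  case 0 then show ?case by simp
next
  case (Suc k)
  have "real (fact (a + Suc k)) = real (a + Suc k) * real (fact (a + k))" by (simp add: algebra_simps)
  also have "\<dots> \<le> real (a + Suc k) * (real (fact a) * (real (a + k)) ^ k)"
    using Suc by (intro mult_left_mono) auto
  also have "\<dots> \<le> real (a + Suc k) * (real (fact a) * (real (a + Suc k)) ^ k)"
    by (intro mult_left_mono power_mono) auto
  also have "\<dots> = real (fact a) * (real (a + Suc k)) ^ Suc k" by (simp add: algebra_simps)
  finally show ?case .
qed

lemma choose_mult_fact_le_pow: "real (n choose k) * real (fact k) \<le> real n ^ k"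
  by (metis binomial_fact_pow of_nat_le_iff of_nat_mult of_nat_power)

lemma real_choose_le_pow: "real (n choose k) \<le> real n ^ k"
proof -
  have "n choose k \<le> n ^ k"
    by (cases "k \<le> n") (simp_all add: binomial_le_pow binomial_eq_0)
  then show ?thesis by (metis of_nat_le_iff of_nat_power)
qed

lemma pow_diff_le_choose_mult_fact:
  assumes "K \<le> s"
  shows "(real s - real K) ^ K \<le> real (s choose K) * real (fact K)"
proof -
  have e: "real (fact K) * real (fact (s - K)) * real (s choose K) = real (fact s)"
    using binomial_fact_lemma[OF assms] by (metis of_nat_mult)
  have "real (fact (s - K)) * (real (s - K) + 1) ^ K \<le> real (fact s)"
    using fact_mult_pow_le_fact_add[of "s - K" K] assms by simp
  moreover have "(real s - real K) ^ K \<le> (real (s - K) + 1) ^ K"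
    using assms by (intro power_mono) (auto simp: of_nat_diff)
  ultimately have "real (fact (s - K)) * (real s - real K) ^ K \<le> real (fact (s - K)) * (real (s choose K) * real (fact K))"
    using e by (smt (verit, ccfv_SIG) mult.commute mult.left_commute mult_left_mono of_nat_0_le_iff)
  thus ?thesis by (simp add: mult_le_cancel_left_pos)
qed

lemma choose_overlap_count_le:
  assumes "K \<le> s" "i \<le> K"
  shows "real (K choose i) * real ((s - K) choose (K - i)) * (real s - real K) ^ i \<le> real (s choose K) * real K ^ (2 * i)"
proof -
  have fpos: "0 < real (fact (K - i))" by simp
  have a1: "real ((s - K) choose (K - i)) * real (fact (K - i)) \<le> (real s - real K) ^ (K - i)"
    using choose_mult_fact_le_pow[of "s - K" "K - i"] assms by (simp add: of_nat_diff)
  have a2: "real (fact K) \<le> real (fact (K - i)) * real K ^ i"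
    using fact_add_le_fact_mult_pow[of "K - i" i] assms by simp
  have "real (K choose i) * real ((s - K) choose (K - i)) * (real s - real K) ^ i * real (fact (K - i))
        = real (K choose i) * (real ((s - K) choose (K - i)) * real (fact (K - i))) * (real s - real K) ^ i"
    by (simp add: algebra_simps)
  also have "\<dots> \<le> real K ^ i * (real s - real K) ^ (K - i) * (real s - real K) ^ i"
    using assms a1 by (intro mult_mono real_choose_le_pow) auto
  also have "\<dots> = real K ^ i * (real s - real K) ^ K"
    using assms by (simp add: mult.assoc power_add[symmetric])
  also have "\<dots> \<le> real K ^ i * (real (s choose K) * real (fact K))"
    using pow_diff_le_choose_mult_fact[OF assms(1)] by (intro mult_left_mono) auto
  also have "\<dots> \<le> real K ^ i * (real (s choose K) * (real (fact (K - i)) * real K ^ i))"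
    using a2 by (intro mult_left_mono) auto
  also have "\<dots> = real (s choose K) * (real K ^ i * real K ^ i) * real (fact (K - i))"
    by (simp add: algebra_simps)
  also have "real K ^ i * real K ^ i = real K ^ (2 * i)"
    by (simp add: power_add[symmetric] mult_2)
  finally show ?thesis using fpos by (simp add: mult_le_cancel_right_pos)
qed

lemma overlap_term_le_small:
  fixes q :: real
  assumes q: "0 < q" "q \<le> 1" and i: "i \<le> K" and Ks: "K < s"
  shows "real (K choose i) * real ((s - K) choose (K - i)) * q ^ ((K choose 2) - (i choose 2))
         \<le> real (s choose K) * q ^ (K choose 2) * ((real K ^ 2 / (real s - real K)) ^ i * (1 / q) ^ (i choose 2))"
proof -
  have ci: "(i choose 2) \<le> (K choose 2)" using i by (rule binomial_right_mono)
  have qe: "q ^ ((K choose 2) - (i choose 2)) = q ^ (K choose 2) * (1 / q) ^ (i choose 2)"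
  proof -
    have "q ^ ((K choose 2) - (i choose 2)) * q ^ (i choose 2) = q ^ (K choose 2)"
      using ci by (simp add: power_add[symmetric])
    thus ?thesis using q by (simp add: field_simps power_one_over)
  qed
  have sK: "0 < real s - real K" using Ks by simp
  have c1: "real (K choose i) * real ((s - K) choose (K - i)) \<le> real (s choose K) * (real K ^ 2 / (real s - real K)) ^ i"
  proof -
    have "real (K choose i) * real ((s - K) choose (K - i)) * (real s - real K) ^ i \<le> real (s choose K) * real K ^ (2 * i)"
      using choose_overlap_count_le[of K s i] Ks i by simp
    hence "real (K choose i) * real ((s - K) choose (K - i)) \<le> real (s choose K) * real K ^ (2 * i) / (real s - real K) ^ i"
      using sK by (simp add: field_simps)
    also have "\<dots> = real (s choose K) * (real K ^ 2 / (real s - real K)) ^ i"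
      by (simp add: power_divide power_mult)
    finally show ?thesis .
  qed
  have "real (K choose i) * real ((s - K) choose (K - i)) * q ^ ((K choose 2) - (i choose 2)) =
        (real (K choose i) * real ((s - K) choose (K - i))) * (q ^ (K choose 2) * (1 / q) ^ (i choose 2))"
    by (simp add: qe)
  also have "\<dots> \<le> (real (s choose K) * (real K ^ 2 / (real s - real K)) ^ i) * (q ^ (K choose 2) * (1 / q) ^ (i choose 2))"
    using q by (intro mult_right_mono c1) auto
  finally show ?thesis by (simp add: algebra_simps)
qed

lemma overlap_term_le_large:
  fixes q :: real
  assumes q: "0 < q" "q \<le> 1" and i: "i \<le> K"
  shows "real (K choose i) * real ((s - K) choose (K - i)) * q ^ ((K choose 2) - (i choose 2))
         \<le> (real K * real s * q powr ((real K + real i - 1) / 2)) ^ (K - i)"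
proof -
  have ci: "(i choose 2) \<le> (K choose 2)" using i by (rule binomial_right_mono)
  have "q ^ ((K choose 2) - (i choose 2)) = q powr (real (K choose 2) - real (i choose 2))"
    using q ci by (simp add: powr_realpow[symmetric] of_nat_diff)
  also have "real (K choose 2) - real (i choose 2) = real (K - i) * ((real K + real i - 1) / 2)"
    using i by (simp add: real_choose_two of_nat_diff field_simps)
  also have "q powr (real (K - i) * ((real K + real i - 1) / 2)) = (q powr ((real K + real i - 1) / 2)) ^ (K - i)"
    using q by (simp add: powr_power)
  finally have qe: "q ^ ((K choose 2) - (i choose 2)) = (q powr ((real K + real i - 1) / 2)) ^ (K - i)" .
  have c1: "real (K choose i) \<le> real K ^ (K - i)"
    using binomial_symmetric[OF i] real_choose_le_pow[of K "K - i"] by simp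
  have c2: "real ((s - K) choose (K - i)) \<le> real s ^ (K - i)"
  proof -
    have "real (s - K) ^ (K - i) \<le> real s ^ (K - i)" by (intro power_mono) auto
    thus ?thesis using real_choose_le_pow[of "s - K" "K - i"] by linarith
  qed
  have "real (K choose i) * real ((s - K) choose (K - i)) * q ^ ((K choose 2) - (i choose 2))
        \<le> real K ^ (K - i) * real s ^ (K - i) * (q powr ((real K + real i - 1) / 2)) ^ (K - i)"
    unfolding qe by (intro mult_mono c1 c2) auto
  also have "\<dots> = (real K * real s * q powr ((real K + real i - 1) / 2)) ^ (K - i)"
    by (simp add: power_mult_distrib)
  finally show ?thesis .
qed

lemma pow_mult_pow_choose_two_le:
  fixes y b :: real
  assumes i: "2 \<le> i" "i \<le> i1" and y: "0 \<le> y" and b: "1 \<le> b" and h: "y * b powr ((real i1 + 1) / 2) \<le> 1"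
  shows "y ^ i * b ^ (i choose 2) \<le> y\<^sup>2 * b"
proof -
  have bp: "0 < b" using b by simp
  have "b ^ (i choose 2) = b powr (real (i choose 2))" using bp by (simp add: powr_realpow)
  also have "real (i choose 2) = 1 + real (i - 2) * ((real i + 1) / 2)"
    using i by (simp add: real_choose_two of_nat_diff field_simps)
  also have "b powr (1 + real (i - 2) * ((real i + 1) / 2)) = b * (b powr ((real i + 1) / 2)) ^ (i - 2)"
    using bp by (simp add: powr_add powr_power)
  finally have be: "b ^ (i choose 2) = b * (b powr ((real i + 1) / 2)) ^ (i - 2)" .
  have ye: "y ^ i = y\<^sup>2 * y ^ (i - 2)"
  proof -
    have "i = 2 + (i - 2)" using i by simp
    hence "y ^ i = y ^ (2 + (i - 2))" by simp
    thus ?thesis by (simp only: power_add)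
  qed
  have "y * b powr ((real i + 1) / 2) \<le> y * b powr ((real i1 + 1) / 2)"
    using i y b by (intro mult_left_mono powr_mono) auto
  hence le1: "y * b powr ((real i + 1) / 2) \<le> 1" using h by simp
  have "y ^ i * b ^ (i choose 2) = y\<^sup>2 * b * (y * b powr ((real i + 1) / 2)) ^ (i - 2)"
    by (simp add: be ye power_mult_distrib algebra_simps)
  also have "\<dots> \<le> y\<^sup>2 * b * 1"
    using le1 y bp by (intro mult_left_mono power_le_one) auto
  finally show ?thesis by simp
qed

text \<open>Overlaps \<open>i \<le> i1\<close> contribute at most \<open>\<mu> y\<^sup>2 / q\<close> each, larger ones at most \<open>1\<close> each.\<close>
lemma overlap_ratio_le:
  fixes q :: real and i1 :: nat
  assumes q: "0 < q" "q \<le> 1" and Ks: "K < s"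
  defines "y \<equiv> real K ^ 2 / (real s - real K)"
  defines "\<mu> \<equiv> real (s choose K) * q ^ (K choose 2)"
  assumes small: "y * (1 / q) powr ((real i1 + 1) / 2) \<le> 1"
    and large: "real K * real s * q powr ((real K + real i1) / 2) \<le> 1"
  shows "overlap_ratio q s K \<le> real K * (\<mu> * y\<^sup>2 * (1 / q) + 1)"
proof -
  have y0: "0 \<le> y" using Ks by (simp add: y_def)
  have mu0: "0 \<le> \<mu>" using q by (simp add: \<mu>_def)
  have trm: "real (K choose i) * real ((s - K) choose (K - i)) * q ^ ((K choose 2) - (i choose 2)) \<le> \<mu> * y\<^sup>2 * (1 / q) + 1"
    if i: "i \<in> {2..<K}" for i
  proof (cases "i \<le> i1")
    case True
    have "real (K choose i) * real ((s - K) choose (K - i)) * q ^ ((K choose 2) - (i choose 2)) \<le> \<mu> * (y ^ i * (1 / q) ^ (i choose 2))"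
      using overlap_term_le_small[OF q _ Ks, of i] i by (simp add: \<mu>_def y_def)
    also have "\<dots> \<le> \<mu> * (y\<^sup>2 * (1 / q))"
      using i True y0 q small by (intro mult_left_mono[OF pow_mult_pow_choose_two_le mu0]) auto
    finally show ?thesis using mu0 by simp
  next
    case False
    have "real (K choose i) * real ((s - K) choose (K - i)) * q ^ ((K choose 2) - (i choose 2)) \<le> (real K * real s * q powr ((real K + real i - 1) / 2)) ^ (K - i)"
      using overlap_term_le_large[OF q, of i K s] i by simp
    also have "\<dots> \<le> 1"
    proof (rule power_le_one)
      show "0 \<le> real K * real s * q powr ((real K + real i - 1) / 2)" by simp
      have "q powr ((real K + real i - 1) / 2) \<le> q powr ((real K + real i1) / 2)"
        using False q by (intro powr_mono') auto
      hence "real K * real s * q powr ((real K + real i - 1) / 2) \<le> real K * real s * q powr ((real K + real i1) / 2)"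
        by (intro mult_left_mono) auto
      thus "real K * real s * q powr ((real K + real i - 1) / 2) \<le> 1" using large by simp
    qed
    finally show ?thesis using mu0 y0 q by (simp add: add_increasing)
  qed
  have "(\<Sum>i\<in>{2..<K}. real (K choose i) * real ((s - K) choose (K - i)) * q ^ ((K choose 2) - (i choose 2)))
        \<le> (\<Sum>i\<in>{2..<K}. \<mu> * y\<^sup>2 * (1 / q) + 1)"
    by (intro sum_mono trm)
  also have "\<dots> = real (K - 2) * (\<mu> * y\<^sup>2 * (1 / q) + 1)" by simp
  also have "\<dots> \<le> real K * (\<mu> * y\<^sup>2 * (1 / q) + 1)"
    using mu0 y0 q by (intro mult_right_mono) auto
  finally show ?thesis unfolding overlap_ratio_def .
qed

section \<open>Asymptotics\<close>

text \<open>For \<open>x = n\<close>, \<open>L = ln n\<close> and \<open>lb = ln (1 / (1 - p))\<close> these are the numerical inequalities used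
  below, stated in terms of the bounds \<open>K \<le> 2 L / lb\<close> and \<open>p n / (2 L\<^sup>2) - 2 \<le> s \<le> p n / (2 L\<^sup>2)\<close>
  for the size \<open>K\<close> of the star and the number \<open>s\<close> of neighbours of its centre in \<open>B\<close>.\<close>
definition sufficiently_large :: "real \<Rightarrow> real \<Rightarrow> real \<Rightarrow> bool" where
  "sufficiently_large p lb x \<longleftrightarrow>
     2 \<le> x \<and> 1 \<le> ln x \<and> 0 \<le> ln (ln x) \<and>
     3 \<le> (2 * ln x - 8 * ln (ln x)) / lb \<and>
     2 * ln x / lb < p * x / (2 * (ln x)\<^sup>2) - 2 \<and>
     (2 * ln x / lb)\<^sup>2 * exp (lb / 4 + ln x / 2 - 2 * ln (ln x)) \<le> (p * x / (2 * (ln x)\<^sup>2) - 2) - 2 * ln x / lb \<and>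
     (2 * ln x / lb) * (p * x / (2 * (ln x)\<^sup>2)) * exp (7 * lb / 4 - 3 * ln x / 2 + 6 * ln (ln x)) \<le> 1 \<and>
     exp (3 * lb) \<le> (p * x / (2 * (ln x)\<^sup>2) - 2) / (2 * ln x / lb) * exp (lb - ln x + 4 * ln (ln x)) \<and>
     16 * (p * x / (2 * (ln x)\<^sup>2)) * ln x * (2 * ln x / lb + 1) \<le> exp (3 * (2 * ln x - 8 * ln (ln x)) - 6 * lb) \<and>
     16 * (p * x / (2 * (ln x)\<^sup>2)) * ln x * (2 * ln x / lb) * ((2 * ln x / lb)\<^sup>2 / ((p * x / (2 * (ln x)\<^sup>2) - 2) - 2 * ln x / lb))\<^sup>2 * exp lb \<le> 1 \<and>
     6 * ln x / p\<^sup>2 \<le> x / (ln x)\<^sup>2 - 1 \<and>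
     1 \<le> p * x / (2 * (ln x)\<^sup>2) - 2 \<and> 1 \<le> x / (ln x)\<^sup>2 - 1"

lemma eventually_sufficiently_large:
  assumes p: "0 < p" and lb: "0 < lb"
  shows "eventually (sufficiently_large p lb) at_top"
proof -
  have e1: "eventually (\<lambda>x::real. 2 \<le> x) at_top" by real_asymp
  have e2: "eventually (\<lambda>x::real. 1 \<le> ln x) at_top" by real_asymp
  have e3: "eventually (\<lambda>x::real. 0 \<le> ln (ln x)) at_top" by real_asymp
  have e4: "eventually (\<lambda>x::real. 3 \<le> (2 * ln x - 8 * ln (ln x)) / lb) at_top" using lb by real_asymp
  have e5: "eventually (\<lambda>x::real. 2 * ln x / lb < p * x / (2 * (ln x)\<^sup>2) - 2) at_top" using p lb by real_asymp
  have e6: "eventually (\<lambda>x::real. (2 * ln x / lb)\<^sup>2 * exp (lb / 4 + ln x / 2 - 2 * ln (ln x)) \<le> (p * x / (2 * (ln x)\<^sup>2) - 2) - 2 * ln x / lb) at_top"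
    using p lb by real_asymp
  have e7: "eventually (\<lambda>x::real. (2 * ln x / lb) * (p * x / (2 * (ln x)\<^sup>2)) * exp (7 * lb / 4 - 3 * ln x / 2 + 6 * ln (ln x)) \<le> 1) at_top"
    using p lb by real_asymp
  have e8: "eventually (\<lambda>x::real. exp (3 * lb) \<le> (p * x / (2 * (ln x)\<^sup>2) - 2) / (2 * ln x / lb) * exp (lb - ln x + 4 * ln (ln x))) at_top"
    using p lb by real_asymp
  have e9: "eventually (\<lambda>x::real. 16 * (p * x / (2 * (ln x)\<^sup>2)) * ln x * (2 * ln x / lb + 1) \<le> exp (3 * (2 * ln x - 8 * ln (ln x)) - 6 * lb)) at_top"
    using p lb by real_asymp
  have e10: "eventually (\<lambda>x::real. 16 * (p * x / (2 * (ln x)\<^sup>2)) * ln x * (2 * ln x / lb) * ((2 * ln x / lb)\<^sup>2 / ((p * x / (2 * (ln x)\<^sup>2) - 2) - 2 * ln x / lb))\<^sup>2 * exp lb \<le> 1) at_top"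
    using p lb by real_asymp
  have e11: "eventually (\<lambda>x::real. 6 * ln x / p\<^sup>2 \<le> x / (ln x)\<^sup>2 - 1) at_top" using p by real_asymp
  have e12: "eventually (\<lambda>x::real. 1 \<le> p * x / (2 * (ln x)\<^sup>2) - 2) at_top" using p by real_asymp
  have e13: "eventually (\<lambda>x::real. 1 \<le> x / (ln x)\<^sup>2 - 1) at_top" by real_asymp
  show ?thesis unfolding sufficiently_large_def
    by (intro eventually_conj e1 e2 e3 e4 e5 e6 e7 e8 e9 e10 e11 e12 e13)
qed

lemma sufficiently_large_sequentially:
  assumes p: "0 < p" and lb: "0 < lb"
  shows "eventually (\<lambda>n::nat. sufficiently_large p lb (real n)) sequentially"
  using eventually_sufficiently_large[OF p lb] filterlim_real_sequentially by (rule eventually_compose_filterlim)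

lemma measure_pmf_UN_le_card_mult:
  assumes "finite I" "\<And>i. i \<in> I \<Longrightarrow> measure_pmf.prob M (A i) \<le> b"
  shows "measure_pmf.prob M (\<Union>i\<in>I. A i) \<le> real (card I) * b"
proof -
  have "measure_pmf.prob M (\<Union>i\<in>I. A i) \<le> (\<Sum>i\<in>I. measure_pmf.prob M (A i))"
    using assms(1) by (rule measure_pmf.finite_measure_subadditive_finite) simp
  also have "\<dots> \<le> (\<Sum>i\<in>I. b)" using assms(2) by (rule sum_mono)
  finally show ?thesis by simp
qed

text \<open>For large \<open>n\<close>: \<open>K = a - 1\<close> is the number of leaves of the star, whose size \<open>a\<close> is the floor
  of \<open>\<kappa>\<close>; \<open>m\<close> is the size of \<open>A\<close> and \<open>B\<close>; \<open>s\<close> is the number of neighbours in \<open>B\<close> that we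
  require of a centre. \<open>K_max\<close>, \<open>s_min\<close> and \<open>s_max\<close> are explicit bounds on \<open>K\<close> and \<open>s\<close>.\<close>
locale large_n =
  fixes p :: real and n :: nat
  assumes p_pos: "0 < p" and p_lt_1: "p < 1" and large: "sufficiently_large p (ln (1 / (1 - p))) (real n)"
begin

definition "lb = ln (1 / (1 - p))"
definition "q = 1 - p"
definition "L = ln (real n)"
definition "\<kappa> = (2 * L - 8 * ln L) / lb"
definition "K = nat (star_size p n - 1)"
definition "m = nat \<lfloor>real n / L\<^sup>2\<rfloor>"
definition "s = nat \<lfloor>p * real m / 2\<rfloor>"
definition "K_max = 2 * L / lb"
definition "s_min = p * real n / (2 * L\<^sup>2) - 2"
definition "s_max = p * real n / (2 * L\<^sup>2)"

lemma lb_pos: "0 < lb"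
  unfolding lb_def using p_pos p_lt_1 by (simp add: ln_div)

lemma q_pos: "0 < q" and q_le1: "q \<le> 1"
  unfolding q_def using p_pos p_lt_1 by auto

lemma inverse_q_eq: "1 / q = exp lb"
  unfolding lb_def q_def using p_lt_1 by simp

lemma q_eq_exp: "q = exp (- lb)"
  using inverse_q_eq q_pos by (simp add: exp_minus field_simps)

lemma sufficiently_large_n: "sufficiently_large p lb (real n)" using large by (simp add: lb_def)

lemma L_ge1: "1 \<le> L" and lnL_ge0: "0 \<le> ln L" and n_ge2: "2 \<le> real n"
  using sufficiently_large_n by (auto simp: sufficiently_large_def L_def)

lemma star_size_eq: "star_size p n = \<lfloor>\<kappa>\<rfloor>"
proof -
  have "2 * log (1 / (1 - p)) (real n) - 8 * log (1 / (1 - p)) (ln (real n)) = \<kappa>"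
    unfolding \<kappa>_def log_def lb_def[symmetric] L_def using lb_pos by (simp add: field_simps)
  thus ?thesis unfolding star_size_def by simp
qed

lemma \<kappa>_ge_3: "3 \<le> \<kappa>"
  using sufficiently_large_n by (simp add: sufficiently_large_def \<kappa>_def L_def)

lemma K_real: "real K = of_int \<lfloor>\<kappa>\<rfloor> - 1"
proof -
  have "3 \<le> \<lfloor>\<kappa>\<rfloor>" using \<kappa>_ge_3 by linarith
  thus ?thesis unfolding K_def star_size_eq by simp
qed

lemma K_lo: "\<kappa> - 2 < real K" and K_hi: "real K \<le> \<kappa> - 1"
  using K_real by linarith+

lemma K_ge1: "1 \<le> K"
  using K_lo \<kappa>_ge_3 by linarith

lemma K_le_K_max: "real K \<le> K_max"
proof -
  have "\<kappa> \<le> 2 * L / lb" unfolding \<kappa>_def using lnL_ge0 lb_pos by (simp add: divide_right_mono)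
  thus ?thesis using K_hi by (simp add: K_max_def)
qed

lemma m_lo: "real n / L\<^sup>2 - 1 \<le> real m" and m_hi: "real m \<le> real n / L\<^sup>2"
proof -
  have "0 \<le> real n / L\<^sup>2" by simp
  thus "real n / L\<^sup>2 - 1 \<le> real m" "real m \<le> real n / L\<^sup>2" unfolding m_def by linarith+
qed

lemma s_min_le: "s_min \<le> real s" and s_le_s_max: "real s \<le> s_max" and two_s_le: "2 * real s \<le> p * real m"
proof -
  have "0 \<le> p * real m / 2" using p_pos by simp
  hence a: "p * real m / 2 - 1 \<le> real s" "real s \<le> p * real m / 2" unfolding s_def by linarith+
  have "p * (real n / L\<^sup>2 - 1) \<le> p * real m" using m_lo p_pos by (intro mult_left_mono) auto
  hence "p * real n / (2 * L\<^sup>2) - p / 2 - 1 \<le> real s" using a by (simp add: field_simps)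
  thus "s_min \<le> real s" unfolding s_min_def using p_lt_1 by linarith
  have "p * real m \<le> p * (real n / L\<^sup>2)" using m_hi p_pos by (intro mult_left_mono) auto
  thus "real s \<le> s_max" using a unfolding s_max_def by (simp add: field_simps)
  show "2 * real s \<le> p * real m" using a by simp
qed

lemma K_max_less_s_min: "K_max < s_min"
  using sufficiently_large_n by (simp add: sufficiently_large_def K_max_def s_min_def L_def)

lemma K_lt_s: "K < s"
  using K_le_K_max K_max_less_s_min s_min_le by linarith

definition "i1 = K div 2"
definition "y = real K ^ 2 / (real s - real K)"
definition "\<mu> = real (s choose K) * q ^ (K choose 2)"

lemma inverse_q_powr: "(1 / q) powr t = exp (t * lb)"
  using inverse_q_eq by (simp add: powr_def)

lemma q_powr: "q powr t = exp (- (t * lb))"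
  using q_pos q_eq_exp by (simp add: powr_def)

lemma y_nonneg: "0 \<le> y" using K_lt_s by (simp add: y_def)

lemma y_le: "y \<le> K_max\<^sup>2 / (s_min - K_max)"
proof -
  have "real K ^ 2 \<le> K_max\<^sup>2" using K_le_K_max by (intro power_mono) auto
  moreover have "s_min - K_max \<le> real s - real K" using s_min_le K_le_K_max by linarith
  moreover have "0 < s_min - K_max" using K_max_less_s_min by simp
  ultimately show ?thesis unfolding y_def by (intro frac_le) auto
qed

lemma small_overlaps: "y * (1 / q) powr ((real i1 + 1) / 2) \<le> 1"
proof -
  have "real i1 \<le> real K / 2" unfolding i1_def by linarith
  hence "(real i1 + 1) / 2 \<le> \<kappa> / 4 + 1 / 4" using K_hi by simp
  hence "(1 / q) powr ((real i1 + 1) / 2) \<le> exp ((\<kappa> / 4 + 1 / 4) * lb)"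
    unfolding inverse_q_powr using lb_pos by (intro exp_mono mult_right_mono) auto
  also have "(\<kappa> / 4 + 1 / 4) * lb = lb / 4 + L / 2 - 2 * ln L"
    using lb_pos by (simp add: \<kappa>_def field_simps)
  finally have B: "(1 / q) powr ((real i1 + 1) / 2) \<le> exp (lb / 4 + L / 2 - 2 * ln L)" .
  have A3: "K_max\<^sup>2 * exp (lb / 4 + L / 2 - 2 * ln L) \<le> s_min - K_max"
    using sufficiently_large_n by (simp add: sufficiently_large_def K_max_def s_min_def L_def)
  have "y * (1 / q) powr ((real i1 + 1) / 2) \<le> K_max\<^sup>2 / (s_min - K_max) * exp (lb / 4 + L / 2 - 2 * ln L)"
    using y_le y_nonneg B by (intro mult_mono) auto
  also have "\<dots> \<le> 1" using A3 K_max_less_s_min by (simp add: field_simps)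
  finally show ?thesis .
qed

lemma large_overlaps: "real K * real s * q powr ((real K + real i1) / 2) \<le> 1"
proof -
  have "real K = 2 * real i1 + real (K mod 2)"
    unfolding i1_def by (metis div_mult_mod_eq mult.commute of_nat_add of_nat_mult of_nat_numeral)
  moreover have "real (K mod 2) \<le> 1" by simp
  ultimately have "real K - 1 \<le> 2 * real i1" by linarith
  then have "real i1 \<ge> (real K - 1) / 2" by simp
  hence "(real K + real i1) / 2 \<ge> 3 * \<kappa> / 4 - 7 / 4" using K_lo by simp
  hence "q powr ((real K + real i1) / 2) \<le> exp (- ((3 * \<kappa> / 4 - 7 / 4) * lb))"
    unfolding q_powr using lb_pos by (intro exp_mono) (simp add: mult_right_mono)
  also have "- ((3 * \<kappa> / 4 - 7 / 4) * lb) = 7 * lb / 4 - 3 * L / 2 + 6 * ln L"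
    using lb_pos by (simp add: \<kappa>_def field_simps)
  finally have B: "q powr ((real K + real i1) / 2) \<le> exp (7 * lb / 4 - 3 * L / 2 + 6 * ln L)" .
  have A4: "K_max * s_max * exp (7 * lb / 4 - 3 * L / 2 + 6 * ln L) \<le> 1"
    using sufficiently_large_n by (simp add: sufficiently_large_def K_max_def s_max_def L_def)
  have "real K * real s * q powr ((real K + real i1) / 2) \<le> K_max * s_max * exp (7 * lb / 4 - 3 * L / 2 + 6 * ln L)"
    using K_le_K_max s_le_s_max B by (intro mult_mono) auto
  thus ?thesis using A4 by simp
qed

lemma exp_le_s_over_K_mult_q_powr: "exp (3 * lb) \<le> real s / real K * q powr ((real K - 1) / 2)"
proof -
  have "(real K - 1) / 2 * lb \<le> (\<kappa> - 2) / 2 * lb" using K_hi lb_pos by (intro mult_right_mono) auto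
  also have "(\<kappa> - 2) / 2 * lb = L - 4 * ln L - lb"
    using lb_pos by (simp add: \<kappa>_def field_simps)
  finally have "exp (lb - L + 4 * ln L) \<le> q powr ((real K - 1) / 2)"
    unfolding q_powr by simp
  moreover have "s_min / K_max \<le> real s / real K"
    using s_min_le K_le_K_max K_ge1 K_max_less_s_min sufficiently_large_n
    by (intro frac_le) (auto simp: sufficiently_large_def s_min_def)
  moreover have "exp (3 * lb) \<le> s_min / K_max * exp (lb - L + 4 * ln L)"
    using sufficiently_large_n by (simp add: sufficiently_large_def K_max_def s_min_def L_def)
  ultimately have "s_min / K_max * exp (lb - L + 4 * ln L) \<le> real s / real K * q powr ((real K - 1) / 2)"
    by (intro mult_mono) auto
  with \<open>exp (3 * lb) \<le> s_min / K_max * exp (lb - L + 4 * ln L)\<close> show ?thesis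
    by linarith
qed

lemma exp_le_\<mu>: "exp (3 * (2 * L - 8 * ln L) - 6 * lb) \<le> \<mu>"
proof -
  have "exp (3 * (2 * L - 8 * ln L) - 6 * lb) = exp (3 * lb * (\<kappa> - 2))"
    using lb_pos by (simp add: \<kappa>_def field_simps)
  also have "\<dots> \<le> exp (3 * lb * real K)" using K_lo lb_pos by simp
  also have "\<dots> = exp (3 * lb) ^ K" by (simp add: exp_of_nat2_mult[symmetric] mult.commute)
  also have "\<dots> \<le> (real s / real K * q powr ((real K - 1) / 2)) ^ K"
    using exp_le_s_over_K_mult_q_powr by (intro power_mono) auto
  also have "\<dots> = (real s / real K) ^ K * q ^ (K choose 2)"
    by (simp only: power_mult_distrib pow_choose_two_eq_powr[OF q_pos])
  also have "\<dots> \<le> \<mu>"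
  proof -
    have "(real s / real K) ^ K \<le> real (s choose K)"
      using binomial_ge_n_over_k_pow_k[of K s] K_lt_s by simp
    then show ?thesis unfolding \<mu>_def using q_pos by (intro mult_right_mono) auto
  qed
  finally show ?thesis .
qed

lemma \<mu>_large: "16 * real s * L * (real K + 1) \<le> \<mu>"
proof -
  have "16 * real s * L * (real K + 1) \<le> 16 * s_max * L * (K_max + 1)"
    using s_le_s_max K_le_K_max L_ge1 by (intro mult_mono) auto
  also have "\<dots> \<le> exp (3 * (2 * L - 8 * ln L) - 6 * lb)"
    using sufficiently_large_n by (simp add: sufficiently_large_def K_max_def s_max_def L_def)
  finally show ?thesis using exp_le_\<mu> by linarith
qed

lemma y_small: "16 * real s * L * real K * y\<^sup>2 * (1 / q) \<le> 1"
proof -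
  have A7: "16 * s_max * L * K_max * (K_max\<^sup>2 / (s_min - K_max))\<^sup>2 * exp lb \<le> 1"
    using sufficiently_large_n by (simp add: sufficiently_large_def K_max_def s_max_def s_min_def L_def)
  have "16 * real s * L * real K * y\<^sup>2 * (1 / q) \<le> 16 * s_max * L * K_max * (K_max\<^sup>2 / (s_min - K_max))\<^sup>2 * exp lb"
    unfolding inverse_q_eq using s_le_s_max K_le_K_max L_ge1 y_le y_nonneg
    by (intro mult_mono power_mono) auto
  thus ?thesis using A7 by simp
qed

lemma overlap_ratio_bound: "overlap_ratio q s K \<le> real K * (\<mu> * y\<^sup>2 * (1 / q) + 1)"
  unfolding \<mu>_def y_def
  by (rule overlap_ratio_le[OF q_pos q_le1 K_lt_s]) (use small_overlaps large_overlaps in \<open>simp_all add: y_def\<close>)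

lemma s_ge1: "1 \<le> s"
proof -
  have "1 \<le> s_min" using sufficiently_large_n by (simp add: sufficiently_large_def s_min_def L_def)
  then show ?thesis using s_min_le by linarith
qed

lemma m_ge1: "1 \<le> m" and m_large: "6 * L / p\<^sup>2 \<le> real m"
proof -
  have "1 \<le> real n / L\<^sup>2 - 1" "6 * L / p\<^sup>2 \<le> real n / L\<^sup>2 - 1"
    using sufficiently_large_n by (simp_all add: sufficiently_large_def L_def)
  then show "1 \<le> m" "6 * L / p\<^sup>2 \<le> real m" using m_lo by linarith+
qed

lemma real_pow_eq_exp: "real n ^ k = exp (real k * L)"
proof -
  have "real n = exp L" using n_ge2 by (simp add: L_def)
  then show ?thesis by (simp add: exp_of_nat_mult)
qed

lemma prob_no_independent_K_set_le:
  assumes "S \<subseteq> {1..n}" "card S = s"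
  shows "measure_pmf.prob (Gnp n p) {G. \<not> (\<exists>L\<subseteq>S. card L = K \<and> independent_set G L)} \<le> exp (- (2 * real s * L))"
proof (rule prob_no_independent_set_le[OF _ _ assms])
  show "0 \<le> p" "p \<le> 1" using p_pos p_lt_1 by auto
  have \<mu>: "real (s choose K) * (1 - p) ^ (K choose 2) = \<mu>" by (simp add: \<mu>_def q_def)
  have sL: "0 \<le> real s * L" using L_ge1 by simp
  then have "4 * (real s * L) \<le> (16 * (real K + 1)) * (real s * L)" by (intro mult_right_mono) auto
  then have "4 * real s * L \<le> 16 * real s * L * (real K + 1)" by (simp add: algebra_simps)
  with \<mu>_large \<mu> show "2 * (2 * real s * L) \<le> real (s choose K) * (1 - p) ^ (K choose 2)" by linarith
  show "0 \<le> 2 * real s * L" using sL by linarith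
  have "4 * overlap_ratio q s K * (2 * real s * L) \<le> 8 * real s * L * (real K * (\<mu> * y\<^sup>2 * (1 / q) + 1))"
  proof -
    have "overlap_ratio q s K * (real s * L) \<le> real K * (\<mu> * y\<^sup>2 * (1 / q) + 1) * (real s * L)"
      using overlap_ratio_bound sL by (rule mult_right_mono)
    from mult_left_mono[OF this, of 8] show ?thesis by (simp add: algebra_simps)
  qed
  also have "\<dots> = (16 * real s * L * real K * y\<^sup>2 * (1 / q)) * (\<mu> / 2) + 8 * real s * L * real K"
    by (simp add: algebra_simps)
  also have "\<dots> \<le> 1 * (\<mu> / 2) + \<mu> / 2"
    using y_small \<mu>_large sL q_pos \<mu>_def by (intro add_mono mult_right_mono) (auto simp: algebra_simps)
  finally show "4 * overlap_ratio (1 - p) s K * (2 * real s * L) \<le> real (s choose K) * (1 - p) ^ (K choose 2)"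
    by (simp add: \<mu> q_def)
qed

lemma prob_some_set_without_independent_K_set_le:
  "measure_pmf.prob (Gnp n p)
     (\<Union>S\<in>{S. S \<subseteq> {1..n} \<and> card S = s}. {G. \<not> (\<exists>L\<subseteq>S. card L = K \<and> independent_set G L)})
   \<le> exp (- L)"
proof -
  have "measure_pmf.prob (Gnp n p)
          (\<Union>S\<in>{S. S \<subseteq> {1..n} \<and> card S = s}. {G. \<not> (\<exists>L\<subseteq>S. card L = K \<and> independent_set G L)})
        \<le> real (card {S. S \<subseteq> {1..n} \<and> card S = s}) * exp (- (2 * real s * L))"
    using prob_no_independent_K_set_le by (intro measure_pmf_UN_le_card_mult) auto
  also have "\<dots> = real (n choose s) * exp (- (2 * real s * L))"
    by (simp add: n_subsets)
  also have "\<dots> \<le> real n ^ s * exp (- (2 * real s * L))"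
    by (intro mult_right_mono real_choose_le_pow) simp
  also have "\<dots> = exp (- (real s * L))"
    by (simp add: real_pow_eq_exp exp_add[symmetric])
  also have "\<dots> \<le> exp (- L)"
    using s_ge1 L_ge1 by simp
  finally show ?thesis .
qed

lemma prob_some_pair_with_few_neighbours_le:
  "measure_pmf.prob (Gnp n p)
     (\<Union>(A, B)\<in>{(A, B). A \<subseteq> {1..n} \<and> B \<subseteq> {1..n} \<and> A \<inter> B = {} \<and> card A = m \<and> card B = m}.
        {G. \<forall>c\<in>A. card (nbhd n G c \<inter> B) < s})
   \<le> exp (- L)"
proof -
  define SM where "SM = {A. A \<subseteq> {1..n} \<and> card A = m}"
  define PP where "PP = {(A, B). A \<subseteq> {1..n} \<and> B \<subseteq> {1..n} \<and> A \<inter> B = {} \<and> card A = m \<and> card B = m}"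
  have PP_SM: "PP \<subseteq> SM \<times> SM" by (auto simp: PP_def SM_def)
  then have "finite PP" by (rule finite_subset) (simp add: SM_def)
  then have "measure_pmf.prob (Gnp n p) (\<Union>(A, B)\<in>PP. {G. \<forall>c\<in>A. card (nbhd n G c \<inter> B) < s})
             \<le> real (card PP) * exp (- (p\<^sup>2 * (real m)\<^sup>2 / 2))"
    using prob_few_neighbours_le[OF p_pos p_lt_1] m_ge1 two_s_le
    by (intro measure_pmf_UN_le_card_mult) (auto simp: PP_def)
  also have "\<dots> \<le> (real n ^ m * real n ^ m) * exp (- (p\<^sup>2 * (real m)\<^sup>2 / 2))"
  proof (intro mult_right_mono)
    have "card PP \<le> (n choose m) * (n choose m)"
      using card_mono[OF _ PP_SM] by (simp add: SM_def n_subsets card_cartesian_product)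
    then have "real (card PP) \<le> real (n choose m) * real (n choose m)"
      by (simp flip: of_nat_mult)
    also have "\<dots> \<le> real n ^ m * real n ^ m" by (intro mult_mono real_choose_le_pow) auto
    finally show "real (card PP) \<le> real n ^ m * real n ^ m" .
  qed simp
  also have "\<dots> = exp (real m * (2 * L - p\<^sup>2 * real m / 2))"
    by (simp add: real_pow_eq_exp exp_add[symmetric] power2_eq_square algebra_simps)
  also have "\<dots> \<le> exp (- L)"
  proof -
    have "6 * L \<le> p\<^sup>2 * real m" using m_large p_pos by (simp add: field_simps)
    then have "2 * L - p\<^sup>2 * real m / 2 \<le> - L" by simp
    moreover from this have "real m * (2 * L - p\<^sup>2 * real m / 2) \<le> 1 * (2 * L - p\<^sup>2 * real m / 2)"
      using m_ge1 L_ge1 by (intro mult_right_mono_neg) auto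
    ultimately show ?thesis by simp
  qed
  finally show ?thesis by (simp add: PP_def)
qed

lemma good_event_if:
  assumes indep: "\<And>S. S \<subseteq> {1..n} \<Longrightarrow> card S = s \<Longrightarrow> \<exists>L\<subseteq>S. card L = K \<and> independent_set G L"
    and degree: "\<And>A B. A \<subseteq> {1..n} \<Longrightarrow> B \<subseteq> {1..n} \<Longrightarrow> A \<inter> B = {} \<Longrightarrow> card A = m \<Longrightarrow> card B = m
                   \<Longrightarrow> \<exists>c\<in>A. s \<le> card (nbhd n G c \<inter> B)"
  shows "good_event n p G"
  unfolding good_event_def
proof (intro allI impI)
  fix A B assume AB: "A \<subseteq> nbhd n G 1 \<and> B \<subseteq> {1..n} - {1} \<and> A \<inter> B = {} \<and>
        card A = nat \<lfloor>real n / (ln (real n))\<^sup>2\<rfloor> \<and> card B = nat \<lfloor>real n / (ln (real n))\<^sup>2\<rfloor>"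
  then have "A \<subseteq> {1..n}" "B \<subseteq> {1..n}" "card A = m" "card B = m"
    by (auto simp: nbhd_def m_def L_def)
  then obtain c where c: "c \<in> A" "s \<le> card (nbhd n G c \<inter> B)"
    using degree[of A B] AB by blast
  then obtain S where S: "S \<subseteq> nbhd n G c \<inter> B" "card S = s"
    by (meson obtain_subset_with_card_n)
  moreover have "S \<subseteq> {1..n}" using S(1) by (auto simp: nbhd_def)
  ultimately obtain Ls where Ls: "Ls \<subseteq> S" "card Ls = K" "independent_set G Ls"
    using indep[of S] by blast
  have "induced_star G c Ls"
    using Ls S c AB by (auto simp: induced_star_def independent_set_def nbhd_def)
  moreover have "Ls \<subseteq> B" "card Ls = nat (star_size p n - 1)"
    using Ls S by (auto simp: K_def)
  ultimately show "\<exists>c\<in>A. \<exists>L\<subseteq>B. card L = nat (star_size p n - 1) \<and> induced_star G c L"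
    using c(1) by blast
qed

lemma prob_good_event_ge: "1 - 2 / real n \<le> measure_pmf.prob (Gnp n p) {G. good_event n p G}"
proof -
  define no_independent where "no_independent = (\<Union>S\<in>{S. S \<subseteq> {1..n} \<and> card S = s}. {G. \<not> (\<exists>L\<subseteq>S. card L = K \<and> independent_set G L)})"
  define few_neighbours where "few_neighbours = (\<Union>(A, B)\<in>{(A, B). A \<subseteq> {1..n} \<and> B \<subseteq> {1..n} \<and> A \<inter> B = {} \<and> card A = m \<and> card B = m}.
        {G. \<forall>c\<in>A. card (nbhd n G c \<inter> B) < s})"
  have "G \<in> {G. good_event n p G}" if G: "G \<notin> no_independent \<union> few_neighbours" for G
  proof (intro CollectI good_event_if)
    show "\<exists>L\<subseteq>S. card L = K \<and> independent_set G L" if "S \<subseteq> {1..n}" "card S = s" for S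
      using G that unfolding no_independent_def by blast
    show "\<exists>c\<in>A. s \<le> card (nbhd n G c \<inter> B)"
      if "A \<subseteq> {1..n}" "B \<subseteq> {1..n}" "A \<inter> B = {}" "card A = m" "card B = m" for A B
      using G that unfolding few_neighbours_def by (auto simp: not_less)
  qed
  then have "UNIV - (no_independent \<union> few_neighbours) \<subseteq> {G. good_event n p G}" by blast
  then have "measure_pmf.prob (Gnp n p) (UNIV - (no_independent \<union> few_neighbours)) \<le> measure_pmf.prob (Gnp n p) {G. good_event n p G}"
    by (rule measure_pmf.finite_measure_mono) simp
  moreover have "measure_pmf.prob (Gnp n p) (no_independent \<union> few_neighbours) \<le> exp (- L) + exp (- L)"
    using measure_Un_le[of no_independent "Gnp n p" few_neighbours] prob_some_set_without_independent_K_set_le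
      prob_some_pair_with_few_neighbours_le by (simp add: no_independent_def few_neighbours_def)
  moreover have "exp (- L) = 1 / real n" using n_ge2 by (simp add: L_def exp_minus inverse_eq_divide)
  ultimately show ?thesis
    using measure_pmf.prob_compl[of "no_independent \<union> few_neighbours" "Gnp n p"] by simp
qed

end

theorem claim6:
  fixes p :: real
  assumes "0 < p" and "p < 1"
  shows "(\<lambda>n. measure_pmf.prob (Gnp n p) {G. good_event n p G}) \<longlonglongrightarrow> 1"
proof (rule tendsto_sandwich)
  have "0 < ln (1 / (1 - p))" using assms by (simp add: ln_div)
  with assms(1) show "eventually (\<lambda>n. 1 - 2 / real n \<le> measure_pmf.prob (Gnp n p) {G. good_event n p G}) sequentially"
  proof (rule sufficiently_large_sequentially[THEN eventually_mono])
    fix n assume "sufficiently_large p (ln (1 / (1 - p))) (real n)"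
    then interpret large_n p n using assms by unfold_locales
    show "1 - 2 / real n \<le> measure_pmf.prob (Gnp n p) {G. good_event n p G}"
      by (rule prob_good_event_ge)
  qed
  show "eventually (\<lambda>n. measure_pmf.prob (Gnp n p) {G. good_event n p G} \<le> 1) sequentially"
    by simp
  show "(\<lambda>n. 1 - 2 / real n) \<longlonglongrightarrow> 1" by real_asymp
qed simp

end
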